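(* For $0\le r\le n$ and $0\le s\le\min(r,n-r)$, $\mathrm{tr}(\Lambda_s^{r,r})=\binom{n}{r}$, and the orthogonal projection $P_s^r$ of $L^2(X)$ onto $L^2(X_r)_s$ is $$P_s^r=\frac{\binom{n}{s}-\binom{n}{s-1}}{\binom{n}{r}}\,\Lambda_s^{r,r}.$$
   Context: Let $\Omega$ be a finite set with $|\Omega|=n\ge1$, $G=S(\Omega)$, $X=\mathcal P(\Omega)$, $X_r=\{x\in X:|x|=r\}$, $G$ acting on $L^2(X)$ (complex functions on $X$ with standard inner product; $L^2(X_r)$ = functions supported on $X_r$) by $(\rho(g)\psi)(x)=\psi(g^{-1}x)$. For $0\le s\le\min(r,n-r)$, $L^2(X_r)_s$ is the unique irreducible $G$-subspace of $L^2(X_r)$ isomorphic to the irreducible representation associated with the partition $(n-s,s)$. For $0\le s\le\min(r_1,n-r_1,r_2,n-r_2)$, $\Lambda_s^{r_1,r_2}$ is a $G$-equivariant map $L^2(X)\to L^2(X)$ sending $L^2(X_{r_1})_s$ into $L^2(X_{r_2})_s$ and vanishing on its orthogonal complement, with kernel $\lambda$ defined on integers $\max(0,r_2-r_1)\le k\le\min(n-r_1,r_2)$ by $(\Lambda_s^{r_1,r_2}\psi)(x_2)=\sum_{x_1\in X_{r_1}}\lambda(|x_2\setminus x_1|)\psi(x_1)$. The kernel agrees on its domain with a unique polynomial of degree $s$ which is nonzero at $0$; $\Lambda_s^{r_1,r_2}$ is normalized so that this polynomial takes the value $1$ at $t=0$. Convention $\binom{n}{-1}=0$. *)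

theory Defs
  imports Complex_Main "HOL-Computational_Algebra.Polynomial" "HOL-Library.Cardinality"
begin

text \<open>Omega is the universe of a finite type 'a; X = Pow Omega = UNIV :: 'a set set;
  L2(X) = functions 'a set => complex.  G = S(Omega) = bijections of 'a.\<close>

type_synonym 'a L2 = "'a set \<Rightarrow> complex"

definition rho :: "('a \<Rightarrow> 'a) \<Rightarrow> 'a L2 \<Rightarrow> 'a L2" where
  "rho g \<psi> = (\<lambda>x. \<psi> (inv g ` x))"

definition inner_L2 :: "('a::finite) L2 \<Rightarrow> 'a L2 \<Rightarrow> complex" where
  "inner_L2 f h = (\<Sum>x\<in>UNIV. f x * cnj (h x))"

definition csubspace :: "'a L2 set \<Rightarrow> bool" where
  "csubspace V \<longleftrightarrow> (\<lambda>x. 0) \<in> V \<and> (\<forall>f\<in>V. \<forall>h\<in>V. (\<lambda>x. f x + h x) \<in> V)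
     \<and> (\<forall>c. \<forall>f\<in>V. (\<lambda>x. c * f x) \<in> V)"

definition G_invariant :: "'a L2 set \<Rightarrow> bool" where
  "G_invariant V \<longleftrightarrow> (\<forall>g. bij g \<longrightarrow> (\<forall>f\<in>V. rho g f \<in> V))"

definition G_subspace :: "'a L2 set \<Rightarrow> bool" where
  "G_subspace V \<longleftrightarrow> csubspace V \<and> G_invariant V"

definition G_irreducible :: "'a L2 set \<Rightarrow> bool" where
  "G_irreducible V \<longleftrightarrow> G_subspace V \<and> V \<noteq> {\<lambda>x. 0} \<and>
     (\<forall>W. G_subspace W \<and> W \<subseteq> V \<longrightarrow> W = {\<lambda>x. 0} \<or> W = V)"

definition clinear_on :: "'a L2 set \<Rightarrow> ('a L2 \<Rightarrow> 'a L2) \<Rightarrow> bool" where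
  "clinear_on V T \<longleftrightarrow> (\<forall>f\<in>V. \<forall>h\<in>V. \<forall>c. T (\<lambda>x. c * f x + h x) = (\<lambda>x. c * T f x + T h x))"

definition G_isomorphic :: "'a L2 set \<Rightarrow> 'a L2 set \<Rightarrow> bool" where
  "G_isomorphic V W \<longleftrightarrow> (\<exists>T. clinear_on V T \<and> bij_betw T V W \<and>
      (\<forall>g. bij g \<longrightarrow> (\<forall>f\<in>V. T (rho g f) = rho g (T f))))"

definition L2_level :: "nat \<Rightarrow> ('a::finite) L2 set" where
  "L2_level r = {\<psi>. \<forall>x. card x \<noteq> r \<longrightarrow> \<psi> x = 0}"

text \<open>Standard model of the irreducible representation of S_n attached to the partition
  (n-s,s), 2s <= n: the Specht module realised as the kernel of the "down" map
  L2(X_s) -> L2(X_{s-1}) (James' kernel intersection theorem).\<close>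
definition Specht_two_row :: "nat \<Rightarrow> ('a::finite) L2 set" where
  "Specht_two_row s = {\<psi>\<in>L2_level s. s \<ge> 1 \<longrightarrow>
      (\<forall>y::'a set. card y = s - 1 \<longrightarrow> (\<Sum>x\<in>{x. card x = s \<and> y \<subseteq> x}. \<psi> x) = 0)}"

definition L2_rs :: "nat \<Rightarrow> nat \<Rightarrow> ('a::finite) L2 set" where
  "L2_rs r s = (THE V. V \<subseteq> L2_level r \<and> G_irreducible V \<and> G_isomorphic V (Specht_two_row s))"

definition kernel_op :: "(nat \<Rightarrow> complex) \<Rightarrow> nat \<Rightarrow> nat \<Rightarrow> ('a::finite) L2 \<Rightarrow> 'a L2" where
  "kernel_op lam r1 r2 \<psi> = (\<lambda>x2. if card x2 = r2 then
      (\<Sum>x1\<in>{x1. card x1 = r1}. lam (card (x2 - x1)) * \<psi> x1) else 0)"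

definition op_trace :: "(('a::finite) L2 \<Rightarrow> 'a L2) \<Rightarrow> complex" where
  "op_trace T = (\<Sum>x\<in>UNIV. T (\<lambda>y. if y = x then 1 else 0) x)"

definition orth_proj :: "('a::finite) L2 set \<Rightarrow> 'a L2 \<Rightarrow> 'a L2" where
  "orth_proj V \<psi> = (THE u. u \<in> V \<and> (\<forall>\<phi>\<in>V. inner_L2 (\<lambda>x. \<psi> x - u x) \<phi> = 0))"

definition binom_int :: "nat \<Rightarrow> int \<Rightarrow> nat" where
  "binom_int n k = (if k < 0 then 0 else n choose nat k)"

end

theory Submission
  imports Defs
begin

text \<open>The up operator \<open>U\<close> (summing over the subsets with one element less) and its adjoint, the down
  operator \<open>D\<close>, satisfy \<open>DU - UD = n - 2|x|\<close>. Hence \<open>D\<^sup>m U\<^sup>m\<close> acts on the harmonic functions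
  \<open>H\<^sub>s = ker D \<inter> L2(X\<^sub>s)\<close> as a nonzero scalar when \<open>2s + m \<le> n\<close>, and \<open>L2(X\<^sub>r)\<close> is the orthogonal
  sum of the spaces \<open>U\<^sup>r\<^sup>-\<^sup>s H\<^sub>s\<close>. Let \<open>E\<close> be the orthogonal projection onto \<open>V = U\<^sup>r\<^sup>-\<^sup>s H\<^sub>s\<close>. The
  elements of \<open>V\<close> invariant under the stabiliser of \<open>x\<^sub>0 \<in> X\<^sub>r\<close> form the line spanned by the zonal
  function \<open>E \<delta>\<^sub>x\<^sub>0\<close>; this makes \<open>V\<close> irreducible. Equivariant operators on \<open>L2(X\<^sub>r)\<close> have
  symmetric kernels, since any two \<open>r\<close>-sets are swapped by a permutation, hence commute; this makes
  \<open>V\<close> the only copy of \<open>(n-s,s)\<close>, i.e. \<open>V = L2(X\<^sub>r)\<^sub>s\<close>. The same line argument gives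
  \<open>\<Lambda> = a E\<close>, and comparing \<open>tr \<Lambda> = C(n,r) \<lambda>(0) = C(n,r)\<close> with
  \<open>tr E = C(n,s) - C(n,s-1)\<close>, obtained by telescoping the traces of the decomposition,
  determines \<open>a\<close>.\<close>

definition delta :: "'a set \<Rightarrow> 'a L2" where
  "delta y = (\<lambda>x. if x = y then 1 else 0)"

definition clinear_op :: "('a L2 \<Rightarrow> 'a L2) \<Rightarrow> bool" where
  "clinear_op T \<longleftrightarrow> (\<forall>f g. T (\<lambda>x. f x + g x) = (\<lambda>x. T f x + T g x))
     \<and> (\<forall>c f. T (\<lambda>x. c * f x) = (\<lambda>x. c * T f x))"

definition equivariant :: "('a L2 \<Rightarrow> 'a L2) \<Rightarrow> bool" where
  "equivariant T \<longleftrightarrow> (\<forall>g f. bij g \<longrightarrow> T (rho g f) = rho g (T f))"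

definition restrict_level :: "nat \<Rightarrow> 'a L2 \<Rightarrow> 'a L2" where
  "restrict_level j f = (\<lambda>x. if card x = j then f x else 0)"

lemma clinear_op_add: "clinear_op T \<Longrightarrow> T (\<lambda>x. f x + g x) = (\<lambda>x. T f x + T g x)"
  by (simp add: clinear_op_def)

lemma clinear_op_scale: "clinear_op T \<Longrightarrow> T (\<lambda>x. c * f x) = (\<lambda>x. c * T f x)"
  by (simp add: clinear_op_def)

lemma clinear_op_zero: "clinear_op T \<Longrightarrow> T (\<lambda>x. 0) = (\<lambda>x. 0)"
  using clinear_op_scale[of T 0 "\<lambda>x. 0"] by simp

lemma clinear_op_divide: "clinear_op T \<Longrightarrow> T (\<lambda>x. f x / c) = (\<lambda>x. T f x / c)"
  using clinear_op_scale[of T "inverse c" f] by (simp add: divide_inverse_commute)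

lemma clinear_op_diff: "clinear_op T \<Longrightarrow> T (\<lambda>x. f x - g x) = (\<lambda>x. T f x - T g x)"
  using clinear_op_add[of T f "\<lambda>x. (-1) * g x"] clinear_op_scale[of T "-1" g] by simp

lemma clinear_op_sum:
  assumes "clinear_op T" and "finite A"
  shows "T (\<lambda>x. \<Sum>i\<in>A. g i x) = (\<lambda>x. \<Sum>i\<in>A. T (g i) x)"
  using \<open>finite A\<close>
proof (induction A rule: finite_induct)
  case empty
  then show ?case by (simp add: clinear_op_zero[OF assms(1)])
next
  case (insert a A)
  then show ?case
    using clinear_op_add[OF assms(1), of "g a" "\<lambda>x. \<Sum>i\<in>A. g i x"] by simp
qed

lemma delta_expansion: "(f :: ('a::finite) L2) = (\<lambda>x. \<Sum>y\<in>UNIV. f y * delta y x)"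
  by (auto simp: delta_def if_distrib cong: if_cong)

lemma clinear_op_expansion:
  assumes "clinear_op (T :: ('a::finite) L2 \<Rightarrow> 'a L2)"
  shows "T f = (\<lambda>x. \<Sum>y\<in>UNIV. f y * T (delta y) x)"
proof -
  have "T f = T (\<lambda>x. \<Sum>y\<in>UNIV. f y * delta y x)" by (rule arg_cong[OF delta_expansion])
  also have "\<dots> = (\<lambda>x. \<Sum>y\<in>UNIV. f y * T (delta y) x)"
    using clinear_op_sum[OF assms, of UNIV "\<lambda>y x. f y * delta y x"]
    by (simp add: clinear_op_scale[OF assms])
  finally show ?thesis .
qed

lemma clinear_op_comp: "clinear_op A \<Longrightarrow> clinear_op B \<Longrightarrow> clinear_op (\<lambda>f. A (B f))"
  by (simp add: clinear_op_def)

lemma clinear_op_funpow: "clinear_op T \<Longrightarrow> clinear_op (T ^^ m)"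
  by (induction m) (auto simp: clinear_op_def)

lemma clinear_op_restrict_level: "clinear_op (restrict_level j)"
  by (auto simp: clinear_op_def restrict_level_def)

lemma equivariant_comp: "equivariant A \<Longrightarrow> equivariant B \<Longrightarrow> equivariant (\<lambda>f. A (B f))"
  by (simp add: equivariant_def)

lemma equivariant_funpow: "equivariant T \<Longrightarrow> equivariant (T ^^ m)"
  by (induction m) (auto simp: equivariant_def)

lemma clinear_op_minus_sum:
  assumes "clinear_op S" and "\<forall>i\<in>A. clinear_op (T i)"
  shows "clinear_op (\<lambda>f x. S f x - (\<Sum>i\<in>A. T i f x))"
  unfolding clinear_op_def
proof (intro conjI allI ext)
  fix f g x
  have "(\<Sum>i\<in>A. T i (\<lambda>x. f x + g x) x) = (\<Sum>i\<in>A. T i f x + T i g x)"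
    using assms(2) by (intro sum.cong) (simp_all add: clinear_op_def)
  then show "S (\<lambda>x. f x + g x) x - (\<Sum>i\<in>A. T i (\<lambda>x. f x + g x) x)
      = S f x - (\<Sum>i\<in>A. T i f x) + (S g x - (\<Sum>i\<in>A. T i g x))"
    using assms(1) by (simp add: clinear_op_def sum.distrib)
next
  fix c f x
  have "(\<Sum>i\<in>A. T i (\<lambda>x. c * f x) x) = (\<Sum>i\<in>A. c * T i f x)"
    using assms(2) by (intro sum.cong) (simp_all add: clinear_op_def)
  then show "S (\<lambda>x. c * f x) x - (\<Sum>i\<in>A. T i (\<lambda>x. c * f x) x) = c * (S f x - (\<Sum>i\<in>A. T i f x))"
    using assms(1) by (simp add: clinear_op_def sum_distrib_left right_diff_distrib)
qed

lemma equivariant_minus_sum: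
  assumes "equivariant S" and "\<forall>i\<in>A. equivariant (T i)"
  shows "equivariant (\<lambda>f x. S f x - (\<Sum>i\<in>A. T i f x))"
  unfolding equivariant_def
proof (intro allI impI ext)
  fix g :: "'a \<Rightarrow> 'a" and f x
  assume "bij g"
  with assms show "S (rho g f) x - (\<Sum>i\<in>A. T i (rho g f) x) = rho g (\<lambda>x. S f x - (\<Sum>i\<in>A. T i f x)) x"
    by (simp add: equivariant_def rho_def)
qed

lemma clinear_op_divide_const: "clinear_op T \<Longrightarrow> clinear_op (\<lambda>f x. T f x / c)"
  unfolding clinear_op_def by (metis (no_types) add_divide_distrib times_divide_eq_right)

lemma equivariant_divide_const: "equivariant T \<Longrightarrow> equivariant (\<lambda>f x. T f x / c)"
  by (simp add: equivariant_def rho_def)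

lemma image_inv_eq_iff: "bij g \<Longrightarrow> inv g ` x = y \<longleftrightarrow> x = g ` y"
  by (metis bij_is_inj bij_is_surj image_f_inv_f image_inv_f_f)

lemma card_image_bij: "bij g \<Longrightarrow> card (g ` z) = card z"
  by (meson bij_betw_imp_inj_on bij_betw_subset card_image subset_UNIV)

lemma card_image_inv: "bij g \<Longrightarrow> card (inv g ` z) = card z"
  using card_image_bij bij_imp_bij_inv by blast

lemma rho_delta: "bij g \<Longrightarrow> rho g (delta y) = delta (g ` y)"
  unfolding rho_def delta_def by (rule ext) (simp only: image_inv_eq_iff)

lemma rho_apply_image: "bij g \<Longrightarrow> rho g f (g ` x) = f x"
  by (simp add: rho_def bij_is_inj image_inv_f_f)

lemma equivariant_restrict_level: "equivariant (restrict_level j)"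
  unfolding equivariant_def restrict_level_def rho_def by (auto simp: card_image_inv)

lemma sum_Collect_if: "(\<Sum>z\<in>{z. P z}. F z) = (\<Sum>z\<in>(UNIV::'b::finite set). if P z then F z else 0)"
  by (simp add: sum.inter_filter[symmetric])

lemma sum_reindex_image:
  assumes "bij g"
  shows "(\<Sum>z\<in>UNIV. F z) = (\<Sum>z\<in>UNIV. F (g ` z))"
proof -
  have "bij (image g)"
    by (rule bij_betw_byWitness[where f' = "image (inv g)"])
      (use assms in \<open>auto simp: bij_is_inj bij_is_surj image_inv_f_f image_f_inv_f\<close>)
  then show ?thesis by (rule sum.reindex_bij_betw[symmetric])
qed

lemma csubspace_add: "csubspace V \<Longrightarrow> f \<in> V \<Longrightarrow> h \<in> V \<Longrightarrow> (\<lambda>x. f x + h x) \<in> V"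
  by (simp add: csubspace_def)

lemma csubspace_scale: "csubspace V \<Longrightarrow> f \<in> V \<Longrightarrow> (\<lambda>x. c * f x) \<in> V"
  by (simp add: csubspace_def)

lemma csubspace_diff: "csubspace V \<Longrightarrow> f \<in> V \<Longrightarrow> h \<in> V \<Longrightarrow> (\<lambda>x. f x - h x) \<in> V"
  using csubspace_add[of V f "\<lambda>x. (-1) * h x"] csubspace_scale[of V h "-1"] by simp

lemma csubspace_sum:
  assumes "csubspace V" and "finite A" and "\<forall>i\<in>A. g i \<in> V"
  shows "(\<lambda>x. \<Sum>i\<in>A. c i * g i x) \<in> V"
  using assms(2,3)
proof (induction A rule: finite_induct)
  case empty
  then show ?case using assms(1) by (simp add: csubspace_def)
next
  case (insert a A)
  then have "(\<lambda>x. c a * g a x) \<in> V" and "(\<lambda>x. \<Sum>i\<in>A. c i * g i x) \<in> V"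
    using csubspace_scale[OF assms(1)] by simp_all
  then show ?case using csubspace_add[OF assms(1)] insert.hyps by fastforce
qed

lemma clinear_on_zero:
  assumes "csubspace V" and "clinear_on V T"
  shows "T (\<lambda>x. 0) = (\<lambda>x. 0)"
proof -
  have "(\<lambda>x. 0) \<in> V" using assms(1) by (simp add: csubspace_def)
  then have "T (\<lambda>x. (-1) * 0 + 0) = (\<lambda>x. (-1) * T (\<lambda>x. 0) x + T (\<lambda>x. 0) x)"
    using assms(2) unfolding clinear_on_def by (elim ballE allE[where x = "-1"]) auto
  then show ?thesis by simp
qed

lemma clinear_op_comp_on:
  assumes "csubspace V" and "clinear_on V Q" and "clinear_op T" and "\<And>f. T f \<in> V"
  shows "clinear_op (\<lambda>f. Q (T f))"
proof -
  have Q: "Q (\<lambda>x. c * f x + h x) = (\<lambda>x. c * Q f x + Q h x)" if "f \<in> V" "h \<in> V" for c f h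
    using assms(2) that by (simp add: clinear_on_def)
  have "(\<lambda>x. 0) \<in> V" using assms(1) by (simp add: csubspace_def)
  show ?thesis
    unfolding clinear_op_def
  proof (intro conjI allI)
    fix f g
    show "Q (T (\<lambda>x. f x + g x)) = (\<lambda>x. Q (T f) x + Q (T g) x)"
      using Q[OF assms(4) assms(4), of 1 f g] by (simp add: clinear_op_add[OF assms(3)])
  next
    fix c f
    show "Q (T (\<lambda>x. c * f x)) = (\<lambda>x. c * Q (T f) x)"
      using Q[OF assms(4) \<open>(\<lambda>x. 0) \<in> V\<close>, of c f] clinear_on_zero[OF assms(1,2)]
      by (simp add: clinear_op_scale[OF assms(3)])
  qed
qed

lemma G_isomorphic_trans:
  assumes "G_isomorphic U V" and "G_isomorphic V W"
  shows "G_isomorphic U W"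
proof -
  obtain S where S: "clinear_on U S" "bij_betw S U V" "\<forall>g. bij g \<longrightarrow> (\<forall>f\<in>U. S (rho g f) = rho g (S f))"
    using assms(1) by (auto simp: G_isomorphic_def)
  obtain T where T: "clinear_on V T" "bij_betw T V W" "\<forall>g. bij g \<longrightarrow> (\<forall>f\<in>V. T (rho g f) = rho g (T f))"
    using assms(2) by (auto simp: G_isomorphic_def)
  have SV: "S f \<in> V" if "f \<in> U" for f using S(2) that by (rule bij_betw_apply)
  have "clinear_on U (\<lambda>f. T (S f))" using S(1) T(1) SV by (simp add: clinear_on_def)
  moreover have "bij_betw (\<lambda>f. T (S f)) U W" using bij_betw_trans[OF S(2) T(2)] by (simp add: comp_def)
  moreover have "\<forall>g. bij g \<longrightarrow> (\<forall>f\<in>U. T (S (rho g f)) = rho g (T (S f)))" using S(3) T(3) SV by simp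
  ultimately show ?thesis unfolding G_isomorphic_def by blast
qed

lemma G_isomorphic_sym:
  assumes "G_subspace V" and "G_isomorphic V W"
  shows "G_isomorphic W V"
proof -
  obtain T where T: "clinear_on V T" "bij_betw T V W" "\<forall>g. bij g \<longrightarrow> (\<forall>f\<in>V. T (rho g f) = rho g (T f))"
    using assms(2) by (auto simp: G_isomorphic_def)
  have V: "csubspace V" "G_invariant V" using assms(1) by (simp_all add: G_subspace_def)
  define Q where "Q = inv_into V T"
  have QV: "Q a \<in> V" and TQ: "T (Q a) = a" if "a \<in> W" for a
    using that T(2) by (auto simp: Q_def bij_betw_def f_inv_into_f inv_into_into)
  have QT: "Q (T v) = v" if "v \<in> V" for v
    using that T(2) by (simp add: Q_def bij_betw_def inv_into_f_f)
  have "clinear_on W Q"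
    unfolding clinear_on_def
  proof (intro ballI allI)
    fix a b c
    assume "a \<in> W" "b \<in> W"
    then have "(\<lambda>x. c * Q a x + Q b x) \<in> V" and "T (\<lambda>x. c * Q a x + Q b x) = (\<lambda>x. c * a x + b x)"
      using T(1) QV TQ V(1) by (simp_all add: clinear_on_def csubspace_def)
    then show "Q (\<lambda>x. c * a x + b x) = (\<lambda>x. c * Q a x + Q b x)"
      using QT[of "\<lambda>x. c * Q a x + Q b x"] by simp
  qed
  moreover have "bij_betw Q W V" unfolding Q_def by (rule bij_betw_inv_into[OF T(2)])
  moreover have "Q (rho g a) = rho g (Q a)" if "bij g" "a \<in> W" for g a
  proof -
    have "rho g (Q a) \<in> V" using V(2) that QV by (simp add: G_invariant_def)
    moreover have "T (rho g (Q a)) = rho g a" using T(3) that QV TQ by simp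
    ultimately show ?thesis using QT[of "rho g (Q a)"] by simp
  qed
  ultimately show ?thesis unfolding G_isomorphic_def by blast
qed

section \<open>Permutations acting on subsets\<close>

lemma exists_bij_betw_image:
  fixes A A' B B' :: "'a::finite set"
  assumes "B \<subseteq> A" and "B' \<subseteq> A'" and "card A = card A'" and "card B = card B'"
  shows "\<exists>f. bij_betw f A A' \<and> f ` B = B'"
proof -
  obtain f1 where f1: "bij_betw f1 B B'" using finite_same_card_bij[OF _ _ assms(4)] by auto
  have "card (A - B) = card (A' - B')" using assms by (simp add: card_Diff_subset)
  then obtain f2 where f2: "bij_betw f2 (A - B) (A' - B')"
    using finite_same_card_bij[of "A - B" "A' - B'"] by auto
  define f where "f = (\<lambda>x. if x \<in> B then f1 x else f2 x)"
  have "bij_betw f B B' = bij_betw f1 B B'" by (rule bij_betw_cong) (simp add: f_def)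
  moreover have "bij_betw f (A - B) (A' - B') = bij_betw f2 (A - B) (A' - B')"
    by (rule bij_betw_cong) (simp add: f_def)
  ultimately have "bij_betw f (B \<union> (A - B)) (B' \<union> (A' - B'))"
    using f1 f2 by (intro bij_betw_combine) auto
  moreover have "B \<union> (A - B) = A" "B' \<union> (A' - B') = A'" using assms(1,2) by auto
  moreover have "f ` B = B'" using f1 unfolding f_def bij_betw_def by auto
  ultimately show ?thesis by auto
qed

lemma exists_bij_fixing_image:
  fixes x0 z z' :: "'a::finite set"
  assumes "card z = card z'" and "card (z \<inter> x0) = card (z' \<inter> x0)"
  shows "\<exists>h. bij h \<and> h ` x0 = x0 \<and> h ` z = z'"
proof -
  obtain f1 where f1: "bij_betw f1 x0 x0" "f1 ` (z \<inter> x0) = z' \<inter> x0"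
    using exists_bij_betw_image[of "z \<inter> x0" x0 "z' \<inter> x0" x0] assms(2) by auto
  have "card (z - x0) = card (z' - x0)" using assms by (simp add: card_Diff_subset_Int)
  then obtain f2 where f2: "bij_betw f2 (-x0) (-x0)" "f2 ` (z - x0) = z' - x0"
    using exists_bij_betw_image[of "z - x0" "-x0" "z' - x0" "-x0"] by auto
  define h where "h = (\<lambda>x. if x \<in> x0 then f1 x else f2 x)"
  have "bij_betw h x0 x0 = bij_betw f1 x0 x0" by (rule bij_betw_cong) (simp add: h_def)
  moreover have "bij_betw h (-x0) (-x0) = bij_betw f2 (-x0) (-x0)" by (rule bij_betw_cong) (simp add: h_def)
  ultimately have "bij_betw h (x0 \<union> -x0) (x0 \<union> -x0)"
    using f1(1) f2(1) by (intro bij_betw_combine) auto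
  then have "bij h" by simp
  moreover have "h ` x0 = x0" using f1(1) unfolding h_def bij_betw_def by auto
  moreover have "h ` z = f1 ` (z \<inter> x0) \<union> f2 ` (z - x0)" by (auto simp: h_def)
  moreover have "z' \<inter> x0 \<union> (z' - x0) = z'" by blast
  ultimately show ?thesis using f1(2) f2(2) by auto
qed

lemma exists_bij_image:
  fixes x y :: "'a::finite set"
  shows "card x = card y \<Longrightarrow> \<exists>g. bij g \<and> g ` x = y"
  using exists_bij_fixing_image[of x y "{}"] by auto

lemma exists_bij_swap_images:
  fixes x y :: "'a::finite set"
  assumes "card x = card y"
  shows "\<exists>g. bij g \<and> g ` x = y \<and> g ` y = x"
proof -
  obtain g1 where g1: "bij g1" "g1 ` x = y" using exists_bij_image[OF assms] by blast
  have "card (g1 ` y) = card x" using assms card_image_bij[OF g1(1)] by simp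
  moreover have "g1 ` y \<inter> y = g1 ` (y \<inter> x)"
    using g1 image_Int[OF bij_is_inj[OF g1(1)]] by simp
  then have "card (g1 ` y \<inter> y) = card (x \<inter> y)" using card_image_bij[OF g1(1)] by (simp add: Int_commute)
  ultimately obtain h where h: "bij h" "h ` y = y" "h ` g1 ` y = x"
    using exists_bij_fixing_image[of "g1 ` y" x y] by blast
  have "bij (h \<circ> g1)" using h(1) g1(1) by (rule bij_comp[rotated])
  then show ?thesis using g1(2) h(2,3) by (metis image_comp)
qed

section \<open>Equivariant operators on one level commute\<close>

definition level_op :: "nat \<Rightarrow> (('a::finite) L2 \<Rightarrow> 'a L2) \<Rightarrow> bool" where
  "level_op r T \<longleftrightarrow> (\<forall>f. T f \<in> L2_level r) \<and> (\<forall>f. T (restrict_level r f) = T f)"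

lemma level_op_comp: "level_op r A \<Longrightarrow> level_op r B \<Longrightarrow> level_op r (\<lambda>f. A (B f))"
  by (simp add: level_op_def)

lemma kernel_symmetric:
  assumes "clinear_op T" and "equivariant T" and "level_op r T"
  shows "T (delta y) x = T (delta x) (y::'a::finite set)"
proof -
  have vanish: "T (delta w) u = 0" if "card w \<noteq> r \<or> card u \<noteq> r" for w u
  proof (cases "card u = r")
    case True
    then have "restrict_level r (delta w) = (\<lambda>x. 0)"
      using that by (auto simp: restrict_level_def delta_def)
    then have "T (delta w) = (\<lambda>x. 0)"
      using assms(3) clinear_op_zero[OF assms(1)] unfolding level_op_def by metis
    then show ?thesis by simp
  next
    case False
    then show ?thesis using assms(3) by (simp add: level_op_def L2_level_def)
  qed
  show ?thesis
  proof (cases "card x = r \<and> card y = r")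
    case True
    then obtain g where g: "bij g" "g ` x = y" "g ` y = x" using exists_bij_swap_images[of x y] by auto
    have "T (delta y) x = T (rho g (delta x)) x" using rho_delta[OF g(1)] g(2) by simp
    also have "\<dots> = T (delta x) (inv g ` x)" using assms(2) g(1) by (simp add: equivariant_def rho_def)
    also have "inv g ` x = y" using image_inv_eq_iff[OF g(1)] g(3) by simp
    finally show ?thesis .
  next
    case False
    then show ?thesis using vanish[of y x] vanish[of x y] by auto
  qed
qed

lemma level_ops_commute:
  assumes "clinear_op A" "equivariant A" "level_op r A"
    and "clinear_op B" "equivariant B" "level_op r B"
  shows "A (B f) = B (A (f::('a::finite) L2))"
proof -
  have BA: "clinear_op (\<lambda>f. B (A f))" "equivariant (\<lambda>f. B (A f))" "level_op r (\<lambda>f. B (A f))"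
    using clinear_op_comp[OF assms(4,1)] equivariant_comp[OF assms(5,2)] level_op_comp[OF assms(6,3)]
    by simp_all
  have "A (B (delta z)) x = B (A (delta z)) x" for z x
  proof -
    have "A (B (delta z)) x = (\<Sum>y\<in>UNIV. B (delta z) y * A (delta y) x)"
      by (subst clinear_op_expansion[OF assms(1)]) simp
    also have "\<dots> = (\<Sum>y\<in>UNIV. A (delta x) y * B (delta y) z)"
    proof (rule sum.cong[OF refl])
      fix y
      show "B (delta z) y * A (delta y) x = A (delta x) y * B (delta y) z"
        using kernel_symmetric[OF assms(1-3), of y x] kernel_symmetric[OF assms(4-6), of z y]
        by (simp only: mult.commute)
    qed
    also have "\<dots> = B (A (delta x)) z"
      by (subst clinear_op_expansion[OF assms(4)]) simp
    also have "\<dots> = B (A (delta z)) x"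
      by (rule kernel_symmetric[OF BA])
    finally show ?thesis .
  qed
  then have "(\<lambda>x. \<Sum>z\<in>UNIV. f z * A (B (delta z)) x) = (\<lambda>x. \<Sum>z\<in>UNIV. f z * B (A (delta z)) x)"
    by simp
  then show ?thesis
    by (simp only: clinear_op_expansion[OF clinear_op_comp[OF assms(1,4)], symmetric]
        clinear_op_expansion[OF BA(1), symmetric])
qed

section \<open>The up and down operators\<close>

definition up :: "('a::finite) L2 \<Rightarrow> 'a L2" where
  "up f y = (\<Sum>z | z \<subseteq> y \<and> card z + 1 = card y. f z)"

definition down :: "('a::finite) L2 \<Rightarrow> 'a L2" where
  "down f y = (\<Sum>x | y \<subseteq> x \<and> card x = card y + 1. f x)"

lemma clinear_op_up: "clinear_op up"
  by (auto intro!: ext simp: clinear_op_def up_def sum.distrib sum_distrib_left)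

lemma clinear_op_down: "clinear_op down"
  by (auto intro!: ext simp: clinear_op_def down_def sum.distrib sum_distrib_left)

lemma equivariant_up: "equivariant up"
  unfolding equivariant_def
proof (intro allI impI ext)
  fix g :: "'a \<Rightarrow> 'a" and f y
  assume g: "bij g"
  have "rho g (up f) y = (\<Sum>z\<in>UNIV. if z \<subseteq> inv g ` y \<and> card z + 1 = card (inv g ` y) then f z else 0)"
    by (simp add: rho_def up_def sum_Collect_if)
  also have "\<dots> = (\<Sum>z\<in>UNIV. if inv g ` z \<subseteq> inv g ` y \<and> card (inv g ` z) + 1 = card (inv g ` y)
      then f (inv g ` z) else 0)"
    using g by (intro sum_reindex_image) (simp add: bij_imp_bij_inv)
  also have "\<dots> = up (rho g f) y"
    using g by (simp add: up_def rho_def sum_Collect_if card_image_inv bij_is_inj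
        inj_image_subset_iff bij_imp_bij_inv)
  finally show "up (rho g f) y = rho g (up f) y" by simp
qed

lemma equivariant_down: "equivariant down"
  unfolding equivariant_def
proof (intro allI impI ext)
  fix g :: "'a \<Rightarrow> 'a" and f y
  assume g: "bij g"
  have "rho g (down f) y = (\<Sum>z\<in>UNIV. if inv g ` y \<subseteq> z \<and> card z = card (inv g ` y) + 1 then f z else 0)"
    by (simp add: rho_def down_def sum_Collect_if)
  also have "\<dots> = (\<Sum>z\<in>UNIV. if inv g ` y \<subseteq> inv g ` z \<and> card (inv g ` z) = card (inv g ` y) + 1
      then f (inv g ` z) else 0)"
    using g by (intro sum_reindex_image) (simp add: bij_imp_bij_inv)
  also have "\<dots> = down (rho g f) y"
    using g by (simp add: down_def rho_def sum_Collect_if card_image_inv bij_is_inj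
        inj_image_subset_iff bij_imp_bij_inv)
  finally show "down (rho g f) y = rho g (down f) y" by simp
qed

lemma clinear_op_up_funpow: "clinear_op (up ^^ m)"
  by (rule clinear_op_funpow[OF clinear_op_up])

lemma clinear_op_down_funpow: "clinear_op (down ^^ m)"
  by (rule clinear_op_funpow[OF clinear_op_down])

lemma equivariant_up_funpow: "equivariant (up ^^ m)"
  by (rule equivariant_funpow[OF equivariant_up])

lemma equivariant_down_funpow: "equivariant (down ^^ m)"
  by (rule equivariant_funpow[OF equivariant_down])

lemma up_eq_sum_remove: "up f y = (\<Sum>b\<in>y. f (y - {b}))"
proof -
  have "{z. z \<subseteq> y \<and> card z + 1 = card y} = (\<lambda>b. y - {b}) ` y"
  proof (intro equalityI subsetI)
    fix z
    assume "z \<in> {z. z \<subseteq> y \<and> card z + 1 = card y}"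
    then have zy: "z \<subseteq> y" and c: "card z + 1 = card y" by auto
    have "card (y - z) = 1" using card_Diff_subset[OF finite_subset[OF zy] zy] c by simp
    then obtain b where "y - z = {b}" using card_1_singletonE by blast
    then show "z \<in> (\<lambda>b. y - {b}) ` y" using zy by blast
  next
    fix z
    assume "z \<in> (\<lambda>b. y - {b}) ` y"
    then obtain b where "b \<in> y" "z = y - {b}" by blast
    then show "z \<in> {z. z \<subseteq> y \<and> card z + 1 = card y}"
      using card_Diff1_less[of y b] by (auto simp: card_Diff_singleton)
  qed
  moreover have "inj_on (\<lambda>b. y - {b}) y" by (auto simp: inj_on_def)
  ultimately show ?thesis by (simp add: up_def sum.reindex)
qed

lemma down_eq_sum_insert: "down f y = (\<Sum>a\<in>-y. (f::('a::finite) L2) (insert a y))"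
proof -
  have "{x. y \<subseteq> x \<and> card x = card y + 1} = (\<lambda>a. insert a y) ` (-y)"
  proof (intro equalityI subsetI)
    fix z
    assume "z \<in> {x. y \<subseteq> x \<and> card x = card y + 1}"
    then have zy: "y \<subseteq> z" and c: "card z = card y + 1" by auto
    have "card (z - y) = 1" using card_Diff_subset[OF finite_subset[OF zy] zy] c by simp
    then obtain b where "z - y = {b}" using card_1_singletonE by blast
    then show "z \<in> (\<lambda>a. insert a y) ` (-y)" using zy by blast
  qed auto
  moreover have "inj_on (\<lambda>a. insert a y) (-y)" unfolding inj_on_def by blast
  ultimately show ?thesis by (simp add: down_def sum.reindex)
qed

text \<open>\<open>U\<close>, \<open>D\<close> and the grading span an \<open>sl\<^sub>2\<close>-action; this relation drives the whole decomposition.\<close>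

lemma down_up_commute:
  "down (up f) y = up (down f) y + (of_nat CARD('a) - 2 * of_nat (card y)) * (f::('a::finite) L2) y"
proof -
  define X where "X = (\<Sum>a\<in>-y. \<Sum>b\<in>y. f (insert a (y - {b})))"
  have "down (up f) y = (\<Sum>a\<in>-y. f y + (\<Sum>b\<in>y. f (insert a (y - {b}))))"
  proof (unfold down_eq_sum_insert up_eq_sum_remove, rule sum.cong[OF refl])
    fix a
    assume a: "a \<in> -y"
    then have "(\<Sum>b\<in>insert a y. f (insert a y - {b})) = f y + (\<Sum>b\<in>y. f (insert a y - {b}))"
      by (simp add: sum.insert)
    also have "(\<Sum>b\<in>y. f (insert a y - {b})) = (\<Sum>b\<in>y. f (insert a (y - {b})))"
      using a by (intro sum.cong) (auto simp: insert_Diff_if)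
    finally show "(\<Sum>b\<in>insert a y. f (insert a y - {b})) = f y + (\<Sum>b\<in>y. f (insert a (y - {b})))" .
  qed
  also have "\<dots> = of_nat (card (-y)) * f y + X" by (simp add: sum.distrib X_def)
  finally have du: "down (up f) y = of_nat (card (-y)) * f y + X" .
  have "up (down f) y = (\<Sum>b\<in>y. f y + (\<Sum>a\<in>-y. f (insert a (y - {b}))))"
  proof (unfold down_eq_sum_insert up_eq_sum_remove, rule sum.cong[OF refl])
    fix b
    assume b: "b \<in> y"
    have "-(y - {b}) = insert b (-y)" using b by auto
    then have "(\<Sum>a\<in>-(y - {b}). f (insert a (y - {b})))
        = f (insert b (y - {b})) + (\<Sum>a\<in>-y. f (insert a (y - {b})))"
      using b by (simp add: sum.insert)
    also have "insert b (y - {b}) = y" using b by auto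
    finally show "(\<Sum>a\<in>-(y - {b}). f (insert a (y - {b}))) = f y + (\<Sum>a\<in>-y. f (insert a (y - {b})))" .
  qed
  also have "\<dots> = of_nat (card y) * f y + X"
    by (simp add: sum.distrib X_def sum.swap[of _ y])
  finally have ud: "up (down f) y = of_nat (card y) * f y + X" .
  have "card (-y) = CARD('a) - card y" by (simp add: Compl_eq_Diff_UNIV card_Diff_subset)
  moreover have "card y \<le> CARD('a)" by (simp add: card_mono)
  ultimately show ?thesis unfolding du ud by (simp add: of_nat_diff algebra_simps)
qed

lemma up_level: "f \<in> L2_level j \<Longrightarrow> up f \<in> L2_level (Suc j)"
  unfolding L2_level_def up_def by (auto intro!: sum.neutral)

lemma up_funpow_level: "f \<in> L2_level j \<Longrightarrow> (up ^^ m) f \<in> L2_level (j + m)"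
  by (induction m) (auto simp: up_level)

lemma down_level_0: "f \<in> L2_level 0 \<Longrightarrow> down f = (\<lambda>x. 0)"
  unfolding L2_level_def down_def by (auto intro!: sum.neutral ext) (metis card.empty nat.distinct(1))

lemma restrict_level_id: "f \<in> L2_level j \<Longrightarrow> restrict_level j f = f"
  by (auto simp: restrict_level_def L2_level_def)

lemma restrict_level_idem: "restrict_level j (restrict_level j f) = restrict_level j f"
  by (rule ext) (simp add: restrict_level_def)

lemma down_restrict_level: "down (restrict_level (Suc j) f) = restrict_level j (down f)"
  unfolding down_def restrict_level_def by (auto intro!: ext sum.cong sum.neutral)

lemma down_funpow_restrict_level:
  "(down ^^ m) (restrict_level (j + m) f) = restrict_level j ((down ^^ m) f)"
  by (induction m arbitrary: f) (simp_all add: funpow_Suc_right down_restrict_level del: funpow.simps)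

lemma inner_L2_add_left: "inner_L2 (\<lambda>x. f x + g x) h = inner_L2 f h + inner_L2 g h"
  unfolding inner_L2_def by (simp add: algebra_simps sum.distrib)

lemma inner_L2_diff_left: "inner_L2 (\<lambda>x. f x - g x) h = inner_L2 f h - inner_L2 g h"
  unfolding inner_L2_def by (simp add: algebra_simps sum_subtractf)

lemma inner_L2_divide_left: "inner_L2 (\<lambda>x. f x / c) h = inner_L2 f h / c"
  unfolding inner_L2_def by (simp add: sum_divide_distrib)

lemma inner_L2_sum_left: "inner_L2 (\<lambda>x. \<Sum>i\<in>A. g i x) h = (\<Sum>i\<in>A. inner_L2 (g i) h)"
  unfolding inner_L2_def by (simp add: sum_distrib_right sum.swap[of _ A])

lemma inner_L2_zero_right: "inner_L2 f (\<lambda>x. 0) = 0"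
  unfolding inner_L2_def by simp

lemma inner_L2_commute: "inner_L2 f h = cnj (inner_L2 h f)"
  unfolding inner_L2_def cnj_sum by (simp add: mult.commute)

lemma inner_L2_self_eq_0: "inner_L2 f f = 0 \<Longrightarrow> f = (\<lambda>x. 0)"
proof -
  assume "inner_L2 f f = 0"
  moreover have "inner_L2 f f = complex_of_real (\<Sum>x\<in>UNIV. (Re (f x))\<^sup>2 + (Im (f x))\<^sup>2)"
    unfolding inner_L2_def by (simp only: complex_mult_cnj of_real_sum)
  ultimately have "(\<Sum>x\<in>UNIV. (Re (f x))\<^sup>2 + (Im (f x))\<^sup>2) = 0" by (simp only: of_real_eq_0_iff)
  then have "\<forall>x. (Re (f x))\<^sup>2 + (Im (f x))\<^sup>2 = 0" by (subst (asm) sum_nonneg_eq_0_iff) auto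
  then show ?thesis by (auto intro!: ext complex_eqI)
qed

lemma inner_L2_up_left: "inner_L2 (up f) h = inner_L2 f (down h)"
proof -
  have "inner_L2 (up f) h
      = (\<Sum>y\<in>UNIV. \<Sum>z\<in>UNIV. if z \<subseteq> y \<and> card z + 1 = card y then f z * cnj (h y) else 0)"
    unfolding inner_L2_def up_def sum_Collect_if
    by (simp add: sum_distrib_right) (intro sum.cong refl, simp)
  also have "\<dots> = (\<Sum>z\<in>UNIV. \<Sum>y\<in>UNIV. if z \<subseteq> y \<and> card z + 1 = card y then f z * cnj (h y) else 0)"
    by (rule sum.swap)
  also have "\<dots> = inner_L2 f (down h)"
    unfolding inner_L2_def down_def sum_Collect_if
    by (simp add: sum_distrib_left cnj_sum if_distrib eq_commute cong: if_cong)
  finally show ?thesis .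
qed

lemma inner_L2_up_funpow_left: "inner_L2 ((up ^^ m) f) h = inner_L2 f ((down ^^ m) h)"
proof (induction m arbitrary: h)
  case 0
  then show ?case by simp
next
  case (Suc m)
  have "inner_L2 ((up ^^ Suc m) f) h = inner_L2 f ((down ^^ m) (down h))"
    by (simp add: inner_L2_up_left Suc.IH)
  then show ?case by (simp add: funpow_Suc_right del: funpow.simps)
qed

lemma inner_L2_up_funpow_right: "inner_L2 f ((up ^^ m) h) = inner_L2 ((down ^^ m) f) h"
  by (metis inner_L2_commute inner_L2_up_funpow_left)

lemma orth_proj_eqI:
  assumes "csubspace V" and "e \<in> V" and "\<forall>\<phi>\<in>V. inner_L2 (\<lambda>x. \<psi> x - e x) \<phi> = 0"
  shows "orth_proj V \<psi> = (e :: ('a::finite) L2)"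
  unfolding orth_proj_def
proof (rule the_equality)
  show "e \<in> V \<and> (\<forall>\<phi>\<in>V. inner_L2 (\<lambda>x. \<psi> x - e x) \<phi> = 0)" using assms by blast
  fix u
  assume u: "u \<in> V \<and> (\<forall>\<phi>\<in>V. inner_L2 (\<lambda>x. \<psi> x - u x) \<phi> = 0)"
  define d where "d = (\<lambda>x. u x - e x)"
  have "d \<in> V" unfolding d_def using assms(1,2) u by (simp add: csubspace_diff)
  have "d = (\<lambda>x. (\<psi> x - e x) - (\<psi> x - u x))" by (auto simp: d_def)
  then have "inner_L2 d d = inner_L2 (\<lambda>x. \<psi> x - e x) d - inner_L2 (\<lambda>x. \<psi> x - u x) d"
    by (simp add: inner_L2_diff_left[symmetric])
  also have "\<dots> = 0" using assms(3) u \<open>d \<in> V\<close> by simp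
  finally have "d = (\<lambda>x. 0)" by (rule inner_L2_self_eq_0)
  then show "u = e" by (auto simp: d_def fun_eq_iff)
qed

section \<open>Harmonic functions\<close>

definition harmonic :: "nat \<Rightarrow> ('a::finite) L2 set" where
  "harmonic j = {f \<in> L2_level j. down f = (\<lambda>x. 0)}"

lemma harmonic_scale: "f \<in> harmonic j \<Longrightarrow> (\<lambda>x. c * f x) \<in> harmonic j"
  by (auto simp: harmonic_def L2_level_def clinear_op_scale[OF clinear_op_down])

lemma harmonic_add: "f \<in> harmonic j \<Longrightarrow> g \<in> harmonic j \<Longrightarrow> (\<lambda>x. f x + g x) \<in> harmonic j"
  by (auto simp: harmonic_def L2_level_def clinear_op_add[OF clinear_op_down])

lemma harmonic_zero: "(\<lambda>x. 0) \<in> harmonic j"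
  by (auto simp: harmonic_def L2_level_def clinear_op_zero[OF clinear_op_down])

lemma harmonic_rho: "bij g \<Longrightarrow> f \<in> harmonic j \<Longrightarrow> rho g f \<in> harmonic j"
  using equivariant_down unfolding harmonic_def L2_level_def equivariant_def
  by (auto simp: rho_def card_image_inv)

lemma down_funpow_harmonic: "f \<in> harmonic j \<Longrightarrow> 0 < m \<Longrightarrow> (down ^^ m) f = (\<lambda>x. 0)"
  by (cases m) (simp_all add: harmonic_def funpow_Suc_right
      clinear_op_zero[OF clinear_op_down_funpow] del: funpow.simps)

lemma Specht_two_row_eq_harmonic: "Specht_two_row s = harmonic s"
proof -
  have down_eq: "down f y = (if card y + 1 = s then (\<Sum>x | card x = s \<and> y \<subseteq> x. f x) else 0)"
    if "f \<in> L2_level s" for f :: "'a L2" and y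
    using that unfolding down_def L2_level_def
    by (auto intro!: sum.neutral arg_cong[where f = "\<lambda>A. sum f A"])
  show ?thesis
  proof (intro equalityI subsetI)
    fix f :: "'a L2"
    assume f: "f \<in> Specht_two_row s"
    then have "f \<in> L2_level s" by (simp add: Specht_two_row_def)
    moreover from this have "down f y = 0" for y
      using f down_eq[of f y] by (auto simp: Specht_two_row_def)
    ultimately show "f \<in> harmonic s" by (auto simp: harmonic_def)
  next
    fix f :: "'a L2"
    assume "f \<in> harmonic s"
    then have f: "f \<in> L2_level s" and "down f = (\<lambda>x. 0)" by (auto simp: harmonic_def)
    then have "(\<Sum>x | card x = s \<and> y \<subseteq> x. f x) = 0" if "1 \<le> s" "card y = s - 1" for y
      using that down_eq[OF f, of y] by simp
    then show "f \<in> Specht_two_row s" using f by (simp add: Specht_two_row_def)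
  qed
qed

definition down_up_scalar :: "nat \<Rightarrow> nat \<Rightarrow> nat \<Rightarrow> complex" where
  "down_up_scalar n j m = (\<Prod>k<m. of_nat (Suc k) * (of_nat n - 2 * of_nat j - of_nat k))"

lemma down_up_scalar_nonzero:
  assumes "2 * j + m \<le> n"
  shows "down_up_scalar n j m \<noteq> 0"
proof -
  have "of_nat (Suc k * (n - 2 * j - k))
      = (of_nat (Suc k) * (of_nat n - 2 * of_nat j - of_nat k) :: complex)"
    if "k < m" for k
    using that assms by (simp add: of_nat_diff) (simp add: algebra_simps)
  then have "down_up_scalar n j m = of_nat (\<Prod>k<m. Suc k * (n - 2 * j - k))"
    unfolding down_up_scalar_def of_nat_prod by (intro prod.cong) auto
  moreover have "(\<Prod>k<m. Suc k * (n - 2 * j - k)) \<noteq> 0" using assms by auto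
  ultimately show ?thesis by (metis of_nat_eq_0_iff)
qed

lemma down_up_harmonic:
  assumes "f \<in> harmonic j"
  shows "down ((up ^^ Suc m) f)
    = (\<lambda>x. of_nat (Suc m) * (of_nat CARD('a) - 2 * of_nat j - of_nat m)
         * (up ^^ m) (f::('a::finite) L2) x)"
proof (induction m)
  case 0
  have "f \<in> L2_level j" and "down f = (\<lambda>x. 0)" using assms by (auto simp: harmonic_def)
  then show ?case
    by (auto intro!: ext simp: down_up_commute clinear_op_zero[OF clinear_op_up] L2_level_def)
next
  case (Suc m)
  define g where "g = (up ^^ Suc m) f"
  have "g \<in> L2_level (j + Suc m)"
    using up_funpow_level assms unfolding g_def harmonic_def by blast
  then have level: "(of_nat CARD('a) - 2 * of_nat (card x)) * g x
      = (of_nat CARD('a) - 2 * of_nat (j + Suc m)) * g x" for x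
    by (cases "card x = j + Suc m") (auto simp: L2_level_def)
  have "up (down g) = (\<lambda>x. of_nat (Suc m) * (of_nat CARD('a) - 2 * of_nat j - of_nat m) * g x)"
    using Suc.IH by (simp add: g_def clinear_op_scale[OF clinear_op_up])
  then have "down (up g) x = (of_nat (Suc m) * (of_nat CARD('a) - 2 * of_nat j - of_nat m)
      + (of_nat CARD('a) - 2 * of_nat (j + Suc m))) * g x" for x
    by (simp only: down_up_commute level distrib_right)
  moreover have "(up ^^ Suc (Suc m)) f = up g" and "(up ^^ Suc m) f = g" by (simp_all add: g_def)
  ultimately show ?case by (auto intro!: ext simp: algebra_simps)
qed

lemma down_up_funpow_harmonic:
  assumes "f \<in> harmonic j"
  shows "(down ^^ m) ((up ^^ m) f) = (\<lambda>x. down_up_scalar CARD('a) j m * (f::('a::finite) L2) x)"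
proof (induction m)
  case 0
  then show ?case by (simp add: down_up_scalar_def)
next
  case (Suc m)
  have "(down ^^ Suc m) ((up ^^ Suc m) f) = (down ^^ m) (down ((up ^^ Suc m) f))"
    by (simp only: funpow_Suc_right[where f = down] o_apply)
  also have "\<dots> = (\<lambda>x. of_nat (Suc m) * (of_nat CARD('a) - 2 * of_nat j - of_nat m)
      * (down ^^ m) ((up ^^ m) f) x)"
    unfolding down_up_harmonic[OF assms] by (rule clinear_op_scale[OF clinear_op_down_funpow])
  finally show ?case by (simp add: Suc.IH down_up_scalar_def mult_ac)
qed

lemma csubspace_harmonic: "csubspace (harmonic j)"
  by (simp add: csubspace_def harmonic_zero harmonic_add harmonic_scale)

lemma G_subspace_harmonic: "G_subspace (harmonic j)"
  by (simp add: G_subspace_def G_invariant_def csubspace_harmonic harmonic_rho)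

section \<open>Functions invariant under the stabiliser of a set\<close>

definition stabilizer :: "'a set \<Rightarrow> ('a \<Rightarrow> 'a) set" where
  "stabilizer x0 = {h. bij h \<and> h ` x0 = x0}"

definition stab_invariant :: "'a set \<Rightarrow> 'a L2 \<Rightarrow> bool" where
  "stab_invariant x0 \<phi> \<longleftrightarrow> (\<forall>h\<in>stabilizer x0. rho h \<phi> = \<phi>)"

lemma stab_invariant_eq:
  assumes "stab_invariant x0 \<phi>" and "card z = card z'"
    and "card (z \<inter> x0) = card (z' \<inter> (x0::'a::finite set))"
  shows "\<phi> z = \<phi> z'"
proof -
  obtain h where h: "bij h" "h ` x0 = x0" "h ` z = z'"
    using exists_bij_fixing_image[OF assms(2,3)] by blast
  then have "\<phi> z = rho h \<phi> z'" using rho_apply_image[OF h(1), of \<phi> z] by simp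
  also have "rho h \<phi> = \<phi>" using assms(1) h by (simp add: stab_invariant_def stabilizer_def)
  finally show ?thesis .
qed

lemma stab_invariant_delta: "stab_invariant x0 (delta x0)"
  by (auto simp: stab_invariant_def stabilizer_def rho_delta)

lemma stab_invariant_equivariant:
  assumes "equivariant T" and "stab_invariant x0 f"
  shows "stab_invariant x0 (T f)"
  unfolding stab_invariant_def
proof
  fix h
  assume h: "h \<in> stabilizer x0"
  then have "rho h (T f) = T (rho h f)" using assms(1) by (simp add: equivariant_def stabilizer_def)
  also have "\<dots> = T f" using assms(2) h by (simp add: stab_invariant_def)
  finally show "rho h (T f) = T f" .
qed

lemma stab_invariant_average:
  "stab_invariant x0 (\<lambda>y. \<Sum>h\<in>stabilizer x0. rho h (w::('a::finite) L2) y)"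
  unfolding stab_invariant_def
proof (intro ballI ext)
  fix h' y
  assume h': "h' \<in> stabilizer x0"
  then have "bij h'" and "inv h' ` x0 = x0" by (auto simp: stabilizer_def image_inv_eq_iff)
  have "rho h' (\<lambda>y. \<Sum>h\<in>stabilizer x0. rho h w y) y = (\<Sum>h\<in>stabilizer x0. rho (h' \<circ> h) w y)"
    using \<open>bij h'\<close> by (simp add: rho_def image_comp o_inv_distrib stabilizer_def)
  also have "\<dots> = (\<Sum>h\<in>stabilizer x0. rho h w y)"
  proof (rule sum.reindex_bij_witness[where i = "\<lambda>h. inv h' \<circ> h" and j = "\<lambda>h. h' \<circ> h"])
    fix h
    assume h: "h \<in> stabilizer x0"
    have "(h' \<circ> h) ` x0 = h' ` h ` x0" "(inv h' \<circ> h) ` x0 = inv h' ` h ` x0"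
      by (simp_all only: image_comp)
    then have "(h' \<circ> h) ` x0 = x0" "(inv h' \<circ> h) ` x0 = x0"
      using h h' \<open>inv h' ` x0 = x0\<close> by (simp_all add: stabilizer_def)
    then show "h' \<circ> h \<in> stabilizer x0" "inv h' \<circ> h \<in> stabilizer x0"
      using h \<open>bij h'\<close> by (simp_all add: stabilizer_def bij_comp bij_imp_bij_inv)
    show "inv h' \<circ> (h' \<circ> h) = h" "h' \<circ> (inv h' \<circ> h) = h"
      using \<open>bij h'\<close> by (auto simp: fun_eq_iff bij_is_inj bij_is_surj surj_f_inv_f)
  qed simp
  finally show "rho h' (\<lambda>y. \<Sum>h\<in>stabilizer x0. rho h w y) y = (\<Sum>h\<in>stabilizer x0. rho h w y)" .
qed

text \<open>Induction on \<open>|z \<inter> x\<^sub>0|\<close>: removing a point \<open>b \<in> z \<inter> x\<^sub>0\<close> from \<open>z\<close> gives \<open>y\<close>, and \<open>D\<phi>(y) = 0\<close>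
  expresses \<open>|x\<^sub>0 - y| \<phi>(z)\<close> through values at sets meeting \<open>x\<^sub>0\<close> in one point less.\<close>

lemma harmonic_stab_invariant_eq_0:
  fixes x0 z0 :: "'a::finite set"
  assumes "\<phi> \<in> harmonic s" and "stab_invariant x0 \<phi>" and "s \<le> card x0"
    and "card z0 = s" and "z0 \<inter> x0 = {}" and "\<phi> z0 = 0"
  shows "\<phi> = (\<lambda>x. 0)"
proof -
  have level: "\<phi> \<in> L2_level s" and harm: "down \<phi> = (\<lambda>x. 0)" using assms(1) by (auto simp: harmonic_def)
  have vanish: "\<phi> z = 0" if "card z = s" and "card (z \<inter> x0) = i" and "i \<le> s" for i z
    using that
  proof (induction i arbitrary: z)
    case 0
    then show ?case using stab_invariant_eq[OF assms(2), of z z0] assms(4-6) by simp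
  next
    case (Suc i)
    then obtain b where b: "b \<in> z" "b \<in> x0" by (metis card.empty disjoint_iff nat.distinct(1))
    define y where "y = z - {b}"
    have card_y: "card y + 1 = s" using Suc.prems b by (simp add: y_def card_Diff_singleton card_gt_0_iff)
    have "y \<inter> x0 = (z \<inter> x0) - {b}" by (auto simp: y_def)
    then have card_yx: "card (y \<inter> x0) = i" using Suc.prems b by simp
    have in_x0: "\<phi> (insert a y) = \<phi> z" if "a \<in> x0 - y" for a
      using that b card_y card_yx Suc.prems
      by (intro stab_invariant_eq[OF assms(2)]) (auto simp: y_def insert_absorb)
    have off_x0: "\<phi> (insert a y) = 0" if "a \<in> -(x0 \<union> y)" for a
    proof -
      have "insert a y \<inter> x0 = y \<inter> x0" using that by auto
      then show ?thesis using that card_y card_yx Suc.prems Suc.IH by simp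
    qed
    have split: "-y = (x0 - y) \<union> -(x0 \<union> y)" by auto
    have "0 = down \<phi> y" using harm by simp
    also have "\<dots> = (\<Sum>a\<in>x0 - y. \<phi> (insert a y)) + (\<Sum>a\<in>-(x0 \<union> y). \<phi> (insert a y))"
      unfolding down_eq_sum_insert split by (rule sum.union_disjoint) auto
    also have "\<dots> = of_nat (card (x0 - y)) * \<phi> z" using in_x0 off_x0 by simp
    finally have "of_nat (card (x0 - y)) * \<phi> z = 0" by simp
    moreover have "card (x0 - y) = card x0 - i"
      using card_yx by (simp add: card_Diff_subset_Int Int_commute)
    then have "card (x0 - y) \<noteq> 0" using Suc.prems assms(3) by simp
    ultimately show ?case by simp
  qed
  show ?thesis
  proof
    fix z
    show "\<phi> z = 0"
    proof (cases "card z = s")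
      case True
      moreover have "card (z \<inter> x0) \<le> card z" by (simp add: card_mono)
      ultimately show ?thesis using vanish[of z "card (z \<inter> x0)"] by simp
    next
      case False
      then show ?thesis using level by (simp add: L2_level_def)
    qed
  qed
qed

lemma harmonic_stab_invariant_proportional:
  fixes x0 z0 :: "'a::finite set"
  assumes "p \<in> harmonic s" "q \<in> harmonic s" "stab_invariant x0 p" "stab_invariant x0 q"
    and "s \<le> card x0" "card z0 = s" "z0 \<inter> x0 = {}" "q z0 \<noteq> 0"
  shows "p = (\<lambda>x. (p z0 / q z0) * q x)"
proof -
  define \<psi> where "\<psi> = (\<lambda>x. p z0 * q x + (- q z0) * p x)"
  have "\<psi> \<in> harmonic s" unfolding \<psi>_def using assms(1,2) by (intro harmonic_add harmonic_scale)
  moreover have "stab_invariant x0 \<psi>"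
    using assms(3,4) by (simp add: stab_invariant_def \<psi>_def rho_def fun_eq_iff)
  ultimately have "\<psi> = (\<lambda>x. 0)"
    using assms(5-7) by (rule harmonic_stab_invariant_eq_0) (simp add: \<psi>_def)
  then show ?thesis using assms(8) by (auto simp: \<psi>_def fun_eq_iff field_simps dest: fun_cong)
qed

section \<open>Projections onto harmonic and isotypic subspaces\<close>

text \<open>\<open>L2(X\<^sub>j)\<close> is the direct sum of the spaces \<open>U\<^sup>j\<^sup>-\<^sup>i H\<^sub>i\<close>, \<open>i \<le> j\<close>, and the projection onto
  the \<open>i\<close>-th summand is \<open>U\<^sup>j\<^sup>-\<^sup>i P\<^sub>i D\<^sup>j\<^sup>-\<^sup>i / c\<close>; subtracting those with \<open>i < j\<close> leaves the
  projection \<open>P\<^sub>j\<close> onto the harmonic functions \<open>H\<^sub>j\<close>.\<close>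

function harm_proj :: "nat \<Rightarrow> ('a::finite) L2 \<Rightarrow> 'a L2" where
  "harm_proj j f = (\<lambda>x. restrict_level j f x
     - (\<Sum>i<j. (up ^^ (j - i)) (harm_proj i ((down ^^ (j - i)) (restrict_level j f))) x
          / down_up_scalar CARD('a) i (j - i)))"
  by auto
termination by (relation "measure fst") auto

declare harm_proj.simps [simp del]

definition isotypic :: "nat \<Rightarrow> nat \<Rightarrow> ('a::finite) L2 set" where
  "isotypic r s = (up ^^ (r - s)) ` harmonic s"

definition isotypic_proj :: "nat \<Rightarrow> nat \<Rightarrow> ('a::finite) L2 \<Rightarrow> 'a L2" where
  "isotypic_proj r s f = (\<lambda>x. (up ^^ (r - s)) (harm_proj s ((down ^^ (r - s)) f)) x
     / down_up_scalar CARD('a) s (r - s))"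

lemma harm_proj_restrict_level: "harm_proj j (restrict_level j f) = harm_proj j f"
  by (subst (1 2) harm_proj.simps) (simp only: restrict_level_idem)

lemma isotypic_proj_restrict_level:
  "s \<le> r \<Longrightarrow> isotypic_proj r s (restrict_level r f) = isotypic_proj r s f"
  using down_funpow_restrict_level[of "r - s" s f]
  by (simp add: isotypic_proj_def harm_proj_restrict_level)

lemma harm_proj_eq:
  "(harm_proj j :: ('a::finite) L2 \<Rightarrow> 'a L2) = (\<lambda>f x. restrict_level j f x - (\<Sum>i<j. isotypic_proj j i f x))"
proof (intro ext)
  fix f :: "'a L2" and x
  have "isotypic_proj j i f x = (up ^^ (j - i)) (harm_proj i ((down ^^ (j - i)) (restrict_level j f))) x
      / down_up_scalar CARD('a) i (j - i)" if "i < j" for i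
    using that by (subst isotypic_proj_restrict_level[symmetric]) (simp_all add: isotypic_proj_def)
  then show "harm_proj j f x = restrict_level j f x - (\<Sum>i<j. isotypic_proj j i f x)"
    by (subst harm_proj.simps) simp
qed

lemma isotypic_proj_self: "isotypic_proj j j = harm_proj j"
  by (auto intro!: ext simp: isotypic_proj_def down_up_scalar_def)

lemma isotypic_proj_eq:
  "(isotypic_proj r s :: ('a::finite) L2 \<Rightarrow> 'a L2)
    = (\<lambda>f x. (\<lambda>f. (up ^^ (r - s)) (harm_proj s ((down ^^ (r - s)) f))) f x
     / down_up_scalar CARD('a) s (r - s))"
  by (simp add: fun_eq_iff isotypic_proj_def)

lemma clinear_op_isotypic_projI:
  "clinear_op (harm_proj s :: ('a::finite) L2 \<Rightarrow> 'a L2) \<Longrightarrow> clinear_op (isotypic_proj r s :: 'a L2 \<Rightarrow> 'a L2)"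
  unfolding isotypic_proj_eq
  by (rule clinear_op_divide_const, rule clinear_op_comp[OF clinear_op_up_funpow
        clinear_op_comp[OF _ clinear_op_down_funpow]])

lemma equivariant_isotypic_projI:
  "equivariant (harm_proj s :: ('a::finite) L2 \<Rightarrow> 'a L2) \<Longrightarrow> equivariant (isotypic_proj r s :: 'a L2 \<Rightarrow> 'a L2)"
  unfolding isotypic_proj_eq
  by (rule equivariant_divide_const, rule equivariant_comp[OF equivariant_up_funpow
        equivariant_comp[OF _ equivariant_down_funpow]])

lemma clinear_op_harm_proj: "clinear_op (harm_proj j :: ('a::finite) L2 \<Rightarrow> 'a L2)"
proof (induction j rule: less_induct)
  case (less j)
  then have "\<forall>i\<in>{..<j}. clinear_op (isotypic_proj j i :: 'a L2 \<Rightarrow> 'a L2)"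
    by (simp add: clinear_op_isotypic_projI)
  then show ?case by (subst harm_proj_eq) (rule clinear_op_minus_sum[OF clinear_op_restrict_level])
qed

lemma equivariant_harm_proj: "equivariant (harm_proj j :: ('a::finite) L2 \<Rightarrow> 'a L2)"
proof (induction j rule: less_induct)
  case (less j)
  then have "\<forall>i\<in>{..<j}. equivariant (isotypic_proj j i :: 'a L2 \<Rightarrow> 'a L2)"
    by (simp add: equivariant_isotypic_projI)
  then show ?case by (subst harm_proj_eq) (rule equivariant_minus_sum[OF equivariant_restrict_level])
qed

lemma clinear_op_isotypic_proj: "clinear_op (isotypic_proj r s)"
  by (rule clinear_op_isotypic_projI[OF clinear_op_harm_proj])

lemma equivariant_isotypic_proj: "equivariant (isotypic_proj r s)"
  by (rule equivariant_isotypic_projI[OF equivariant_harm_proj])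

lemma harm_proj_level: "harm_proj j f \<in> L2_level j"
proof (induction j arbitrary: f rule: less_induct)
  case (less j)
  have "isotypic_proj j i f \<in> L2_level j" if "i < j" for i
  proof -
    have "(up ^^ (j - i)) (harm_proj i ((down ^^ (j - i)) f)) \<in> L2_level (i + (j - i))"
      using that less.IH by (intro up_funpow_level) simp
    then show ?thesis using that by (simp add: isotypic_proj_def L2_level_def)
  qed
  then show ?case by (subst harm_proj_eq) (auto simp: L2_level_def restrict_level_def)
qed

lemma harm_proj_fixes: "f \<in> harmonic j \<Longrightarrow> harm_proj j f = f"
proof -
  assume f: "f \<in> harmonic j"
  have "isotypic_proj j i f = (\<lambda>x. 0)" if "i < j" for i
    using that down_funpow_harmonic[OF f, of "j - i"]
    by (simp add: isotypic_proj_def clinear_op_zero[OF clinear_op_harm_proj]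
        clinear_op_zero[OF clinear_op_up_funpow])
  then show ?thesis
    using f by (subst harm_proj_eq) (simp add: harmonic_def restrict_level_id)
qed

lemma down_isotypic_proj:
  assumes "harm_proj i ((down ^^ (Suc k - i)) f) \<in> harmonic i" and "i \<le> k" and "i + k < CARD('a)"
  shows "down (isotypic_proj (Suc k) i f) = isotypic_proj k i (down (f::('a::finite) L2))"
proof -
  define m where "m = k - i"
  define g where "g = harm_proj i ((down ^^ Suc m) f)"
  define c :: complex where "c = of_nat (Suc m) * (of_nat CARD('a) - 2 * of_nat i - of_nat m)"
  have Suc_m: "Suc k - i = Suc m" using assms(2) by (simp add: m_def)
  have scalar_Suc: "down_up_scalar CARD('a) i (Suc m) = c * down_up_scalar CARD('a) i m"
    by (simp add: down_up_scalar_def c_def)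
  moreover have "down_up_scalar CARD('a) i (Suc m) \<noteq> 0"
    using assms(2,3) by (intro down_up_scalar_nonzero) (simp add: m_def)
  ultimately have "c \<noteq> 0" by auto
  have "down (isotypic_proj (Suc k) i f)
      = (\<lambda>x. down ((up ^^ Suc m) g) x / down_up_scalar CARD('a) i (Suc m))"
    by (simp add: isotypic_proj_def Suc_m g_def clinear_op_divide[OF clinear_op_down] del: funpow.simps)
  also have "\<dots> = (\<lambda>x. (up ^^ m) g x / down_up_scalar CARD('a) i m)"
  proof -
    have "down ((up ^^ Suc m) g) = (\<lambda>x. c * (up ^^ m) g x)"
      using down_up_harmonic assms(1) Suc_m unfolding c_def g_def by simp
    then show ?thesis using \<open>c \<noteq> 0\<close> by (simp add: scalar_Suc)
  qed
  also have "\<dots> = isotypic_proj k i (down f)"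
    by (simp add: isotypic_proj_def g_def m_def funpow_Suc_right del: funpow.simps)
  finally show ?thesis .
qed

lemma harm_proj_harmonic: "2 * j \<le> CARD('a) \<Longrightarrow> harm_proj j (f::('a::finite) L2) \<in> harmonic j"
proof (induction j arbitrary: f rule: less_induct)
  case (less j)
  show ?case
  proof (cases j)
    case 0
    then show ?thesis using harm_proj_level[of 0 f] by (simp add: harmonic_def down_level_0)
  next
    case (Suc k)
    have "down (isotypic_proj (Suc k) i f) = isotypic_proj k i (down f)" if "i < Suc k" for i
      using that less Suc by (intro down_isotypic_proj) auto
    then have "down (harm_proj (Suc k) f)
        = (\<lambda>x. restrict_level k (down f) x - (\<Sum>i<Suc k. isotypic_proj k i (down f) x))"
      by (simp add: harm_proj_eq clinear_op_diff[OF clinear_op_down] clinear_op_sum[OF clinear_op_down]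
          down_restrict_level del: sum.lessThan_Suc)
    also have "\<dots> = (\<lambda>x. harm_proj k (down f) x - isotypic_proj k k (down f) x)"
      by (simp add: harm_proj_eq algebra_simps)
    finally have "down (harm_proj j f) = (\<lambda>x. 0)" by (simp add: Suc isotypic_proj_self)
    then show ?thesis by (simp add: harmonic_def harm_proj_level)
  qed
qed

lemma harm_proj_orthogonal:
  assumes "h \<in> harmonic j"
  shows "inner_L2 (\<lambda>x. f x - harm_proj j f x) h = 0"
proof -
  have "inner_L2 (\<lambda>x. f x - restrict_level j f x) h = 0"
    using assms unfolding inner_L2_def
    by (intro sum.neutral) (auto simp: restrict_level_def harmonic_def L2_level_def)
  moreover have "inner_L2 (isotypic_proj j i f) h = 0" if "i < j" for i
    using that down_funpow_harmonic[OF assms, of "j - i"]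
    by (simp add: isotypic_proj_def inner_L2_divide_left inner_L2_up_funpow_left inner_L2_zero_right)
  moreover have "(\<lambda>x. f x - harm_proj j f x)
      = (\<lambda>x. (f x - restrict_level j f x) + (\<Sum>i<j. isotypic_proj j i f x))"
    by (rule ext) (simp add: harm_proj_eq)
  ultimately show ?thesis by (simp add: inner_L2_add_left inner_L2_sum_left)
qed

lemma op_trace_delta: "op_trace T = (\<Sum>x\<in>UNIV. T (delta x) x)"
  by (simp add: op_trace_def delta_def)

lemma op_trace_scale: "op_trace (\<lambda>f x. c * T f x) = c * op_trace T"
  by (simp add: op_trace_def sum_distrib_left)

lemma op_trace_divide: "op_trace (\<lambda>f x. T f x / c) = op_trace T / c"
  by (simp add: op_trace_def sum_divide_distrib)

lemma op_trace_minus_sum: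
  "op_trace (\<lambda>f x. S f x - (\<Sum>i\<in>A. T i f x)) = op_trace S - (\<Sum>i\<in>A. op_trace (T i))"
  by (simp add: op_trace_def sum_subtractf sum.swap[of _ A])

lemma op_trace_comp_commute:
  assumes "clinear_op A" and "clinear_op B"
  shows "op_trace (\<lambda>f. A (B f)) = op_trace (\<lambda>f. B (A (f::('a::finite) L2)))"
proof -
  have "op_trace (\<lambda>f. A (B f)) = (\<Sum>x\<in>UNIV. \<Sum>y\<in>UNIV. B (delta x) y * A (delta y) x)"
    unfolding op_trace_delta by (subst clinear_op_expansion[OF assms(1)]) simp
  also have "\<dots> = (\<Sum>y\<in>UNIV. \<Sum>x\<in>UNIV. A (delta y) x * B (delta x) y)"
    by (subst sum.swap) (simp add: mult.commute)
  also have "\<dots> = op_trace (\<lambda>f. B (A f))"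
    unfolding op_trace_delta by (subst clinear_op_expansion[OF assms(2)]) simp
  finally show ?thesis .
qed

lemma card_level_set: "card {x::'a::finite set. card x = r} = CARD('a) choose r"
  using n_subsets[of "UNIV :: 'a set" r] by simp

lemma op_trace_restrict_level:
  "op_trace (restrict_level j :: ('a::finite) L2 \<Rightarrow> _) = of_nat (CARD('a) choose j)"
proof -
  have "op_trace (restrict_level j :: 'a L2 \<Rightarrow> _) = (\<Sum>x\<in>(UNIV::'a set set). if card x = j then 1 else 0)"
    by (auto simp: op_trace_def restrict_level_def intro!: sum.cong)
  also have "\<dots> = of_nat (CARD('a) choose j)" by (simp add: sum.If_cases card_level_set)
  finally show ?thesis .
qed

lemma op_trace_isotypic_proj:
  assumes "s \<le> r" and "r + s \<le> CARD('a)"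
  shows "op_trace (isotypic_proj r s :: ('a::finite) L2 \<Rightarrow> _) = op_trace (harm_proj s :: 'a L2 \<Rightarrow> _)"
proof -
  define m where "m = r - s"
  define c where "c = down_up_scalar CARD('a) s m"
  have "c \<noteq> 0" using assms by (simp add: c_def m_def down_up_scalar_nonzero)
  note UD = clinear_op_up_funpow[of m] clinear_op_down_funpow[of m]
  have "op_trace (\<lambda>f. (up ^^ m) (harm_proj s ((down ^^ m) (f::'a L2))))
      = op_trace (\<lambda>f. harm_proj s ((down ^^ m) ((up ^^ m) (f::'a L2))))"
    using op_trace_comp_commute[OF UD(1) clinear_op_comp[OF clinear_op_harm_proj[of s] UD(2)]] by simp
  also have "\<dots> = op_trace (\<lambda>f. (down ^^ m) ((up ^^ m) (harm_proj s (f::'a L2))))"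
    using op_trace_comp_commute[OF clinear_op_harm_proj[of s] clinear_op_comp[OF UD(2) UD(1)]] by simp
  also have "\<dots> = op_trace (\<lambda>f x. c * harm_proj s (f::'a L2) x)"
  proof -
    have "(down ^^ m) ((up ^^ m) (harm_proj s f)) = (\<lambda>x. c * harm_proj s f x)" for f :: "'a L2"
      using assms by (simp add: c_def down_up_funpow_harmonic harm_proj_harmonic)
    then show ?thesis by simp
  qed
  finally show ?thesis
    using \<open>c \<noteq> 0\<close> by (simp add: isotypic_proj_eq op_trace_divide op_trace_scale c_def m_def)
qed

lemma sum_op_trace_harm_proj:
  assumes "2 * j \<le> CARD('a)"
  shows "(\<Sum>i\<le>j. op_trace (harm_proj i :: ('a::finite) L2 \<Rightarrow> _)) = of_nat (CARD('a) choose j)"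
proof -
  have "op_trace (isotypic_proj j i :: 'a L2 \<Rightarrow> _) = op_trace (harm_proj i :: 'a L2 \<Rightarrow> _)" if "i < j" for i
    using that assms by (intro op_trace_isotypic_proj) auto
  then have "op_trace (harm_proj j :: 'a L2 \<Rightarrow> _)
      = of_nat (CARD('a) choose j) - (\<Sum>i<j. op_trace (harm_proj i :: 'a L2 \<Rightarrow> _))"
    by (subst harm_proj_eq) (simp add: op_trace_minus_sum op_trace_restrict_level)
  then show ?thesis by (simp add: lessThan_Suc_atMost[symmetric])
qed

lemma op_trace_harm_proj:
  assumes "2 * s \<le> CARD('a)"
  shows "op_trace (harm_proj s :: ('a::finite) L2 \<Rightarrow> _)
    = of_nat (CARD('a) choose s) - of_nat (binom_int CARD('a) (int s - 1))"
proof (cases s)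
  case 0
  then show ?thesis using sum_op_trace_harm_proj[of 0] by (simp add: binom_int_def)
next
  case (Suc k)
  then show ?thesis
    using assms sum_op_trace_harm_proj[of s, where 'a = 'a] sum_op_trace_harm_proj[of k, where 'a = 'a]
    by (simp add: binom_int_def) (metis add_diff_cancel_left')
qed

lemma choose_minus_binom_int_nonzero:
  assumes "2 * s \<le> n"
  shows "(of_nat (n choose s) - of_nat (binom_int n (int s - 1)) :: complex) \<noteq> 0"
proof (cases s)
  case 0
  then show ?thesis by (simp add: binom_int_def)
next
  case (Suc k)
  then have "n choose k < n choose s" using assms by (intro binomial_strict_mono) auto
  then show ?thesis using Suc by (simp add: binom_int_def)
qed

section \<open>The isotypic subspace \<open>U\<^sup>r\<^sup>-\<^sup>s H\<^sub>s\<close> of \<open>L2(X\<^sub>r)\<close>\<close>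

definition lower :: "nat \<Rightarrow> nat \<Rightarrow> ('a::finite) L2 \<Rightarrow> 'a L2" where
  "lower r s f = (\<lambda>x. (down ^^ (r - s)) f x / down_up_scalar CARD('a) s (r - s))"

lemma equivariant_lower: "equivariant (lower r s)"
  unfolding lower_def
  by (rule equivariant_divide_const[OF equivariant_down_funpow])

lemma isotypic_proj_eq_up_lower: "isotypic_proj r s f = (up ^^ (r - s)) (harm_proj s (lower r s f))"
  by (simp add: isotypic_proj_def lower_def clinear_op_divide[OF clinear_op_harm_proj]
      clinear_op_divide[OF clinear_op_up_funpow])

lemma isotypic_proj_level: "s \<le> r \<Longrightarrow> isotypic_proj r s f \<in> L2_level r"
  using up_funpow_level[OF harm_proj_level[of s "lower r s f"], of "r - s"]
  by (simp add: isotypic_proj_eq_up_lower)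

context
  fixes r s :: nat
  assumes s_le_r: "s \<le> r" and r_plus_s_le: "r + s \<le> CARD('a::finite)"
begin

lemma down_up_scalar_isotypic_nonzero: "down_up_scalar CARD('a) s (r - s) \<noteq> 0"
  using s_le_r r_plus_s_le by (intro down_up_scalar_nonzero) simp

lemma lower_up: "p \<in> harmonic s \<Longrightarrow> lower r s ((up ^^ (r - s)) p) = (p :: 'a L2)"
  using down_up_scalar_isotypic_nonzero by (simp add: lower_def down_up_funpow_harmonic)

lemma isotypic_lower:
  assumes "v \<in> isotypic r s"
  shows "lower r s v \<in> harmonic s" and "(up ^^ (r - s)) (lower r s v) = (v :: 'a L2)"
  using assms lower_up by (auto simp: isotypic_def)

lemma isotypic_subset_level: "isotypic r s \<subseteq> (L2_level r :: 'a L2 set)"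
  using up_funpow_level[of _ s "r - s"] s_le_r by (auto simp: isotypic_def harmonic_def)

lemma isotypic_proj_in_isotypic: "isotypic_proj r s (f :: 'a L2) \<in> isotypic r s"
  using s_le_r r_plus_s_le
  by (simp add: isotypic_proj_eq_up_lower isotypic_def harm_proj_harmonic)

lemma isotypic_proj_fixes: "v \<in> isotypic r s \<Longrightarrow> isotypic_proj r s v = (v :: 'a L2)"
  using isotypic_lower[of v] by (simp add: isotypic_proj_eq_up_lower harm_proj_fixes)

lemma isotypic_proj_orthogonal:
  assumes "v \<in> isotypic r s"
  shows "inner_L2 (\<lambda>x. f x - isotypic_proj r s f x) (v :: 'a L2) = 0"
proof -
  define m where "m = r - s"
  define c where "c = down_up_scalar CARD('a) s m"
  have "(down ^^ m) (isotypic_proj r s f) = (\<lambda>x. c * harm_proj s (lower r s f) x)"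
    using s_le_r r_plus_s_le
    by (simp add: isotypic_proj_eq_up_lower down_up_funpow_harmonic harm_proj_harmonic c_def m_def)
  also have "\<dots> = harm_proj s ((down ^^ m) f)"
    using down_up_scalar_isotypic_nonzero
    by (simp add: lower_def clinear_op_divide[OF clinear_op_harm_proj] c_def m_def)
  finally have "(down ^^ m) (\<lambda>x. f x - isotypic_proj r s f x)
      = (\<lambda>x. (down ^^ m) f x - harm_proj s ((down ^^ m) f) x)"
    by (simp add: clinear_op_diff[OF clinear_op_down_funpow])
  then show ?thesis
    using isotypic_lower[OF assms] harm_proj_orthogonal
    by (metis inner_L2_up_funpow_right m_def)
qed

lemma csubspace_isotypic: "csubspace (isotypic r s :: 'a L2 set)"
proof -
  have U: "clinear_op (up ^^ (r - s) :: 'a L2 \<Rightarrow> 'a L2)" by (rule clinear_op_up_funpow)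
  have "(\<lambda>x. 0) \<in> (isotypic r s :: 'a L2 set)"
    unfolding isotypic_def using clinear_op_zero[OF U, symmetric] harmonic_zero by (rule image_eqI)
  moreover have "(\<lambda>x. f x + h x) \<in> isotypic r s"
    if f: "f \<in> isotypic r s" and h: "h \<in> isotypic r s" for f h :: "'a L2"
  proof -
    obtain p q where p: "p \<in> harmonic s" "f = (up ^^ (r - s)) p"
      and q: "q \<in> harmonic s" "h = (up ^^ (r - s)) q"
      using f h unfolding isotypic_def by blast
    then have "(\<lambda>x. f x + h x) = (up ^^ (r - s)) (\<lambda>x. p x + q x)" using clinear_op_add[OF U] by simp
    then show ?thesis unfolding isotypic_def using harmonic_add[OF p(1) q(1)] by (rule image_eqI)
  qed
  moreover have "(\<lambda>x. c * f x) \<in> isotypic r s" if f: "f \<in> isotypic r s" for c and f :: "'a L2"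
  proof -
    obtain p where p: "p \<in> harmonic s" "f = (up ^^ (r - s)) p" using f unfolding isotypic_def by blast
    then have "(\<lambda>x. c * f x) = (up ^^ (r - s)) (\<lambda>x. c * p x)" using clinear_op_scale[OF U] by simp
    then show ?thesis unfolding isotypic_def using harmonic_scale[OF p(1)] by (rule image_eqI)
  qed
  ultimately show ?thesis by (simp add: csubspace_def)
qed

lemma G_subspace_isotypic: "G_subspace (isotypic r s :: 'a L2 set)"
proof -
  have "rho g ((up ^^ (r - s)) p) \<in> isotypic r s" if "bij g" "p \<in> harmonic s" for g and p :: "'a L2"
  proof -
    have "rho g ((up ^^ (r - s)) p) = (up ^^ (r - s)) (rho g p)"
      using that(1) equivariant_up_funpow[of "r - s", where 'a = 'a] by (simp add: equivariant_def)
    then show ?thesis unfolding isotypic_def using harmonic_rho[OF that] by (rule image_eqI)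
  qed
  then show ?thesis
    by (simp add: G_subspace_def csubspace_isotypic) (auto simp: G_invariant_def isotypic_def)
qed

lemma G_isomorphic_harmonic_isotypic: "G_isomorphic (harmonic s) (isotypic r s :: 'a L2 set)"
  unfolding G_isomorphic_def
proof (intro exI[of _ "up ^^ (r - s)"] conjI allI impI ballI)
  show "clinear_on (harmonic s) (up ^^ (r - s) :: 'a L2 \<Rightarrow> 'a L2)"
    by (simp add: clinear_on_def clinear_op_add[OF clinear_op_up_funpow]
        clinear_op_scale[OF clinear_op_up_funpow])
  have "inj_on (up ^^ (r - s)) (harmonic s :: 'a L2 set)"
    by (rule inj_on_inverseI[where g = "lower r s"]) (erule lower_up)
  then show "bij_betw (up ^^ (r - s)) (harmonic s) (isotypic r s :: 'a L2 set)"
    by (simp add: bij_betw_def isotypic_def)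
  show "(up ^^ (r - s)) (rho g f) = rho g ((up ^^ (r - s)) f)" if "bij g" for g and f :: "'a L2"
    using that equivariant_up_funpow[of "r - s", where 'a = 'a] by (simp add: equivariant_def)
qed

lemma level_op_isotypic_proj: "level_op r (isotypic_proj r s :: 'a L2 \<Rightarrow> 'a L2)"
  using s_le_r by (simp add: level_op_def isotypic_proj_level isotypic_proj_restrict_level)

lemma orth_proj_isotypic: "orth_proj (isotypic r s :: 'a L2 set) = isotypic_proj r s"
  by (intro ext orth_proj_eqI csubspace_isotypic isotypic_proj_in_isotypic ballI isotypic_proj_orthogonal)

definition zonal :: "'a set \<Rightarrow> 'a L2" where
  "zonal x0 = isotypic_proj r s (delta x0)"

lemma zonal_in_isotypic: "zonal x0 \<in> isotypic r s"
  by (simp add: zonal_def isotypic_proj_in_isotypic)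

lemma stab_invariant_zonal: "stab_invariant x0 (zonal x0)"
  unfolding zonal_def
  by (rule stab_invariant_equivariant[OF equivariant_isotypic_proj stab_invariant_delta])

lemma isotypic_proj_delta:
  assumes "card y = card x0"
  obtains g where "bij g" "g ` x0 = y" "isotypic_proj r s (delta y) = rho g (zonal x0)"
proof -
  obtain g where g: "bij g" "g ` x0 = y" using exists_bij_image[OF assms[symmetric]] by blast
  have "delta y = rho g (delta x0)" using rho_delta[OF g(1)] g(2) by simp
  then have "isotypic_proj r s (delta y) = rho g (zonal x0)"
    using equivariant_isotypic_proj[of r s, where 'a = 'a] g(1) by (simp add: zonal_def equivariant_def)
  with g that show ?thesis by blast
qed

lemma isotypic_proj_delta_off_level: "card y \<noteq> r \<Longrightarrow> isotypic_proj r s (delta y) = (\<lambda>x. 0)"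
proof -
  assume "card y \<noteq> r"
  then have "restrict_level r (delta y) = (\<lambda>x. 0)" by (auto simp: restrict_level_def delta_def)
  then have "isotypic_proj r s (delta y) = isotypic_proj r s (\<lambda>x. 0 :: complex)"
    using isotypic_proj_restrict_level[OF s_le_r, of "delta y"] by simp
  also have "\<dots> = (\<lambda>x. 0)" by (rule clinear_op_zero[OF clinear_op_isotypic_proj])
  finally show ?thesis .
qed

lemma op_trace_isotypic_proj_eq_zonal:
  assumes "card x0 = r"
  shows "op_trace (isotypic_proj r s :: 'a L2 \<Rightarrow> 'a L2) = of_nat (CARD('a) choose r) * zonal x0 x0"
proof -
  have "isotypic_proj r s (delta x) x = (if card x = r then zonal x0 x0 else 0)" for x :: "'a set"
  proof (cases "card x = r")
    case True
    then obtain g :: "'a \<Rightarrow> 'a" where "bij g" "g ` x0 = x" "isotypic_proj r s (delta x) = rho g (zonal x0)"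
      using isotypic_proj_delta assms by metis
    then show ?thesis using True rho_apply_image by auto
  next
    case False
    then show ?thesis by (simp add: isotypic_proj_delta_off_level)
  qed
  then show ?thesis by (simp add: op_trace_delta sum.If_cases card_level_set)
qed

lemma op_trace_isotypic_proj_eq_binomials:
  "op_trace (isotypic_proj r s :: 'a L2 \<Rightarrow> 'a L2)
    = of_nat (CARD('a) choose s) - of_nat (binom_int CARD('a) (int s - 1))"
  using op_trace_isotypic_proj[OF s_le_r r_plus_s_le] op_trace_harm_proj[of s, where 'a = 'a]
    s_le_r r_plus_s_le by simp

lemma zonal_self_nonzero:
  assumes "card x0 = r"
  shows "zonal x0 x0 \<noteq> 0"
proof
  assume "zonal x0 x0 = 0"
  then have "op_trace (isotypic_proj r s :: 'a L2 \<Rightarrow> 'a L2) = 0"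
    using op_trace_isotypic_proj_eq_zonal[OF assms] by simp
  then show False
    using op_trace_isotypic_proj_eq_binomials choose_minus_binom_int_nonzero[of s "CARD('a)"]
      s_le_r r_plus_s_le by simp
qed

lemma isotypic_proj_expansion:
  "v \<in> isotypic r s \<Longrightarrow> v = (\<lambda>x. \<Sum>y\<in>UNIV. v y * isotypic_proj r s (delta y) (x :: 'a set))"
  using clinear_op_expansion[OF clinear_op_isotypic_proj[of r s], of v] isotypic_proj_fixes by simp

text \<open>The stabiliser-invariant harmonic functions form a line, and \<open>lower\<close> transports this to the
  isotypic subspace.\<close>

lemma stab_invariant_isotypic_eq_scaled_zonal:
  assumes "card x0 = r" and "f \<in> isotypic r s" and "stab_invariant x0 f"
  shows "\<exists>c. f = (\<lambda>x. c * zonal x0 x)"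
proof -
  have "card (-x0) = CARD('a) - r" using assms(1) by (simp add: Compl_eq_Diff_UNIV card_Diff_subset)
  then have "s \<le> card (-x0)" using r_plus_s_le by simp
  then obtain z0 where z0: "z0 \<subseteq> -x0" "card z0 = s" by (rule obtain_subset_with_card_n)
  then have z0_x0: "s \<le> card x0" "z0 \<inter> x0 = {}" using s_le_r assms(1) by auto
  define p where "p = lower r s f"
  define q where "q = lower r s (zonal x0)"
  have pq: "p \<in> harmonic s" "q \<in> harmonic s" "stab_invariant x0 p" "stab_invariant x0 q"
    using isotypic_lower(1) assms(2,3) zonal_in_isotypic stab_invariant_zonal
    by (simp_all add: p_def q_def stab_invariant_equivariant[OF equivariant_lower])
  have zonal_q: "zonal x0 = (up ^^ (r - s)) q"
    using isotypic_lower(2)[OF zonal_in_isotypic[of x0]] by (simp add: q_def)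
  have "q z0 \<noteq> 0"
  proof
    assume "q z0 = 0"
    then have "q = (\<lambda>x. 0)" using harmonic_stab_invariant_eq_0[OF pq(2,4) z0_x0(1) z0(2) z0_x0(2)] by simp
    then show False
      using zonal_self_nonzero[OF assms(1)] zonal_q by (simp add: clinear_op_zero[OF clinear_op_up_funpow])
  qed
  have "f = (up ^^ (r - s)) p" using isotypic_lower(2)[OF assms(2)] by (simp add: p_def)
  also have "p = (\<lambda>x. (p z0 / q z0) * q x)"
    by (rule harmonic_stab_invariant_proportional[OF pq z0_x0(1) z0(2) z0_x0(2) \<open>q z0 \<noteq> 0\<close>])
  also have "(up ^^ (r - s)) (\<lambda>x. (p z0 / q z0) * q x) = (\<lambda>x. (p z0 / q z0) * zonal x0 x)"
    unfolding zonal_q by (rule clinear_op_scale[OF clinear_op_up_funpow])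
  finally show ?thesis by blast
qed

lemma isotypic_subset_G_subspace:
  assumes "card x0 = r" and "G_subspace W" and "zonal x0 \<in> W"
  shows "isotypic r s \<subseteq> W"
proof
  fix v :: "'a L2"
  assume v: "v \<in> isotypic r s"
  have W: "csubspace W" "G_invariant W" using assms(2) by (simp_all add: G_subspace_def)
  have "isotypic_proj r s (delta y) \<in> W" for y :: "'a set"
  proof (cases "card y = r")
    case True
    then obtain g where "bij g" "isotypic_proj r s (delta y) = rho g (zonal x0)"
      using isotypic_proj_delta assms(1) by metis
    then show ?thesis using W(2) assms(3) by (simp add: G_invariant_def)
  next
    case False
    then show ?thesis using W(1) by (simp add: isotypic_proj_delta_off_level csubspace_def)
  qed
  then have "(\<lambda>x. \<Sum>y\<in>UNIV. v y * isotypic_proj r s (delta y) x) \<in> W"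
    by (intro csubspace_sum W(1)) auto
  then show "v \<in> W" using isotypic_proj_expansion[OF v] by simp
qed

text \<open>Averaging over the stabiliser of a point of its support turns a nonzero element of \<open>W\<close> into
  a nonzero multiple of the zonal function.\<close>

lemma zonal_in_G_subspace:
  assumes "card x0 = r" and "G_subspace W" and "W \<subseteq> isotypic r s" and "W \<noteq> {\<lambda>x. 0}"
  shows "zonal x0 \<in> W"
proof -
  have Wc: "csubspace W" and Wi: "G_invariant W" using assms(2) by (simp_all add: G_subspace_def)
  obtain w x where w: "w \<in> W" "w x \<noteq> 0" using Wc assms(4) by (auto simp: csubspace_def)
  then have "card x = r" using assms(3) isotypic_subset_level by (auto simp: L2_level_def)
  then obtain g where g: "bij g" "g ` x0 = x" using exists_bij_image assms(1) by metis
  define w1 where "w1 = rho (inv g) w"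
  have "w1 \<in> W" using Wi w(1) g(1) by (simp add: w1_def G_invariant_def bij_imp_bij_inv)
  have "w1 x0 \<noteq> 0" using w(2) g by (simp add: w1_def rho_def inv_inv_eq)
  define w' where "w' = (\<lambda>y. \<Sum>h\<in>stabilizer x0. rho h w1 y)"
  have "w' \<in> W"
    unfolding w'_def using csubspace_sum[OF Wc, of "stabilizer x0" "\<lambda>h. rho h w1" "\<lambda>_. 1"]
      Wi \<open>w1 \<in> W\<close> by (simp add: G_invariant_def stabilizer_def)
  have "rho h w1 x0 = w1 x0" if "h \<in> stabilizer x0" for h
    using that image_inv_eq_iff[of h x0 x0] by (simp add: stabilizer_def rho_def)
  then have "w' x0 = of_nat (card (stabilizer x0)) * w1 x0" by (simp add: w'_def)
  moreover have "id \<in> stabilizer x0" by (simp add: stabilizer_def)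
  then have "card (stabilizer x0) \<noteq> 0" by (auto simp: card_eq_0_iff)
  ultimately have "w' x0 \<noteq> 0" using \<open>w1 x0 \<noteq> 0\<close> by simp
  obtain c where "w' = (\<lambda>y. c * zonal x0 y)"
    using stab_invariant_isotypic_eq_scaled_zonal[OF assms(1) _ stab_invariant_average] \<open>w' \<in> W\<close> assms(3)
    unfolding w'_def by blast
  with \<open>w' x0 \<noteq> 0\<close> have "zonal x0 = (\<lambda>y. (1 / c) * w' y)" by auto
  then show ?thesis using csubspace_scale[OF Wc \<open>w' \<in> W\<close>, of "1 / c"] by simp
qed

lemma G_irreducible_isotypic: "G_irreducible (isotypic r s :: 'a L2 set)"
proof -
  obtain x0 :: "'a set" where x0: "card x0 = r"
    using obtain_subset_with_card_n[of r "UNIV :: 'a set"] r_plus_s_le by auto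
  have "(isotypic r s :: 'a L2 set) \<noteq> {\<lambda>x. 0}"
    using zonal_in_isotypic[of x0] zonal_self_nonzero[OF x0] by auto
  moreover have "W = isotypic r s" if "G_subspace W" "W \<subseteq> isotypic r s" "W \<noteq> {\<lambda>x. 0}"
    for W :: "'a L2 set"
    using that isotypic_subset_G_subspace[OF x0 _ zonal_in_G_subspace[OF x0]] by blast
  ultimately show ?thesis using G_subspace_isotypic by (auto simp: G_irreducible_def)
qed

text \<open>Multiplicity one: an isomorphic copy \<open>V\<close> of \<open>H\<^sub>s\<close> in \<open>L2(X\<^sub>r)\<close> is the image of the isotypic
  subspace under some \<open>Q\<close>; the equivariant operator \<open>Q E\<close> commutes with \<open>E\<close>, so \<open>Q\<close> takes
  values in the isotypic subspace.\<close>

lemma isotypic_unique: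
  assumes "V \<subseteq> L2_level r" and "G_irreducible V" and "G_isomorphic V (harmonic s)"
  shows "V = (isotypic r s :: 'a L2 set)"
proof -
  have V: "G_subspace V" "V \<noteq> {\<lambda>x. 0}" using assms(2) by (simp_all add: G_irreducible_def)
  have "G_isomorphic V (isotypic r s)"
    by (rule G_isomorphic_trans[OF assms(3) G_isomorphic_harmonic_isotypic])
  then have "G_isomorphic (isotypic r s) V" by (rule G_isomorphic_sym[OF V(1)])
  then obtain Q where Q: "clinear_on (isotypic r s) Q" "bij_betw Q (isotypic r s) V"
      "\<forall>g. bij g \<longrightarrow> (\<forall>f\<in>isotypic r s. Q (rho g f) = rho g (Q f))"
    by (auto simp: G_isomorphic_def)
  define A where "A = (\<lambda>f. Q (isotypic_proj r s f))"
  have "clinear_op A"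
    unfolding A_def
    by (rule clinear_op_comp_on[OF csubspace_isotypic Q(1) clinear_op_isotypic_proj
          isotypic_proj_in_isotypic])
  moreover have "equivariant A"
    using Q(3) equivariant_isotypic_proj[of r s, where 'a = 'a]
    by (simp add: A_def equivariant_def isotypic_proj_in_isotypic)
  moreover have "level_op r A"
    using bij_betw_apply[OF Q(2) isotypic_proj_in_isotypic] assms(1)
    by (auto simp: A_def level_op_def isotypic_proj_restrict_level[OF s_le_r])
  ultimately have "A (isotypic_proj r s f) = isotypic_proj r s (A f)" for f
    by (rule level_ops_commute[OF _ _ _ clinear_op_isotypic_proj equivariant_isotypic_proj
          level_op_isotypic_proj])
  then have "Q a \<in> isotypic r s" if "a \<in> isotypic r s" for a
    using that isotypic_proj_fixes isotypic_proj_in_isotypic by (metis A_def)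
  then have "V \<subseteq> isotypic r s" using Q(2) by (auto simp: bij_betw_def)
  then show ?thesis using G_irreducible_isotypic V unfolding G_irreducible_def by blast
qed

lemma L2_rs_eq_isotypic: "L2_rs r s = (isotypic r s :: 'a L2 set)"
  unfolding L2_rs_def Specht_two_row_eq_harmonic
proof (rule the_equality)
  show "(isotypic r s :: 'a L2 set) \<subseteq> L2_level r \<and> G_irreducible (isotypic r s :: 'a L2 set)
      \<and> G_isomorphic (isotypic r s :: 'a L2 set) (harmonic s)"
    by (intro conjI isotypic_subset_level G_irreducible_isotypic
        G_isomorphic_sym[OF G_subspace_harmonic G_isomorphic_harmonic_isotypic])
qed (use isotypic_unique in blast)

lemma equivariant_op_eq_scaled_isotypic_proj:
  fixes L :: "'a L2 \<Rightarrow> 'a L2"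
  assumes "clinear_op L" and "equivariant L" and "\<forall>v\<in>isotypic r s. L v \<in> isotypic r s"
    and "\<forall>\<psi>. (\<forall>\<phi>\<in>isotypic r s. inner_L2 \<psi> \<phi> = 0) \<longrightarrow> L \<psi> = (\<lambda>x. 0)"
  shows "\<exists>a. L = (\<lambda>f x. a * isotypic_proj r s f x)"
proof -
  obtain x0 :: "'a set" where x0: "card x0 = r"
    using obtain_subset_with_card_n[of r "UNIV :: 'a set"] r_plus_s_le by auto
  have "stab_invariant x0 (L (zonal x0))"
    by (rule stab_invariant_equivariant[OF assms(2) stab_invariant_zonal])
  then obtain a where a: "L (zonal x0) = (\<lambda>x. a * zonal x0 x)"
    using stab_invariant_isotypic_eq_scaled_zonal[OF x0] assms(3) zonal_in_isotypic by blast
  have L_delta: "L (isotypic_proj r s (delta y)) = (\<lambda>x. a * isotypic_proj r s (delta y) x)" for y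
  proof (cases "card y = r")
    case True
    then obtain g where "bij g" "isotypic_proj r s (delta y) = rho g (zonal x0)"
      using isotypic_proj_delta x0 by metis
    then show ?thesis using assms(2) a by (simp add: equivariant_def rho_def)
  next
    case False
    then show ?thesis by (simp add: isotypic_proj_delta_off_level clinear_op_zero[OF assms(1)])
  qed
  have "L f = (\<lambda>x. a * isotypic_proj r s f x)" for f
  proof -
    have "L (\<lambda>x. f x - isotypic_proj r s f x) = (\<lambda>x. 0)"
      using assms(4) isotypic_proj_orthogonal by blast
    then have "L f = L (isotypic_proj r s f)"
      using clinear_op_diff[OF assms(1), of f "isotypic_proj r s f"] by (simp add: fun_eq_iff)
    also have "\<dots> = (\<lambda>x. \<Sum>y\<in>UNIV. f y * L (isotypic_proj r s (delta y)) x)"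
      by (rule clinear_op_expansion[OF clinear_op_comp[OF assms(1) clinear_op_isotypic_proj]])
    also have "\<dots> = (\<lambda>x. a * isotypic_proj r s f x)"
      by (subst (2) clinear_op_expansion[OF clinear_op_isotypic_proj])
        (simp add: L_delta sum_distrib_left mult_ac)
    finally show ?thesis .
  qed
  then show ?thesis by blast
qed

end

section \<open>Kernel operators and the main theorem\<close>

lemma clinear_op_kernel_op: "clinear_op (kernel_op lam r1 r2)"
  unfolding clinear_op_def kernel_op_def
  by (auto intro!: ext simp: sum.distrib sum_distrib_left algebra_simps)

lemma equivariant_kernel_op: "equivariant (kernel_op lam r1 r2)"
  unfolding equivariant_def
proof (intro allI impI ext)
  fix g :: "'a \<Rightarrow> 'a" and f :: "'a L2" and y
  assume g: "bij g"
  have ig: "bij (inv g)" using g by (rule bij_imp_bij_inv)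
  have card_diff: "card (inv g ` y - inv g ` x) = card (y - x)" for x
    using card_image_inv[OF g, of "y - x"] image_set_diff[OF bij_is_inj[OF ig]] by simp
  have "(\<Sum>x\<in>{x. card x = r1}. lam (card (inv g ` y - x)) * f x)
      = (\<Sum>x\<in>UNIV. if card x = r1 then lam (card (inv g ` y - x)) * f x else 0)"
    by (rule sum_Collect_if)
  also have "\<dots> = (\<Sum>x\<in>UNIV. if card (inv g ` x) = r1
      then lam (card (inv g ` y - inv g ` x)) * f (inv g ` x) else 0)"
    by (rule sum_reindex_image[OF ig])
  also have "\<dots> = (\<Sum>x\<in>{x. card x = r1}. lam (card (y - x)) * f (inv g ` x))"
    unfolding sum_Collect_if by (intro sum.cong refl) (simp add: card_image_inv[OF g] card_diff)
  finally show "kernel_op lam r1 r2 (rho g f) y = rho g (kernel_op lam r1 r2 f) y"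
    by (simp add: kernel_op_def rho_def card_image_inv[OF g])
qed

lemma op_trace_kernel_op:
  "op_trace (kernel_op lam r r :: ('a::finite) L2 \<Rightarrow> 'a L2) = of_nat (CARD('a) choose r) * lam 0"
proof -
  have "kernel_op lam r r (delta x) x = (if card x = r then lam 0 else 0)" for x :: "'a set"
    by (simp add: kernel_op_def delta_def if_distrib[of "\<lambda>c. _ * c"] sum.delta cong: if_cong)
  then show ?thesis by (simp add: op_trace_delta sum.If_cases card_level_set)
qed

theorem mainTheorem7:
  fixes r s :: nat and lam :: "nat \<Rightarrow> complex" and p :: "complex poly"
    and Lam :: "('a::finite) L2 \<Rightarrow> 'a L2"
  defines "Lam \<equiv> kernel_op lam r r"
  assumes "r \<le> CARD('a)" and "s \<le> min r (CARD('a) - r)"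
    and "degree p = s" and "poly p 0 = 1"
    and "\<forall>k::nat. max 0 (int r - int r) \<le> int k \<and> k \<le> min (CARD('a) - r) r
            \<longrightarrow> lam k = poly p (of_nat k)"
    and "\<forall>\<psi>\<in>L2_rs r s. Lam \<psi> \<in> L2_rs r s"
    and "\<forall>\<psi>. (\<forall>\<phi>\<in>L2_rs r s. inner_L2 \<psi> \<phi> = 0) \<longrightarrow> Lam \<psi> = (\<lambda>x. 0)"
  shows "op_trace Lam = of_nat (CARD('a) choose r)
    \<and> orth_proj (L2_rs r s :: 'a L2 set) =
      (\<lambda>\<psi> x. ((of_nat (CARD('a) choose s) - of_nat (binom_int CARD('a) (int s - 1)))
                / of_nat (CARD('a) choose r)) * Lam \<psi> x)"
proof -
  define d :: complex where "d = of_nat (CARD('a) choose s) - of_nat (binom_int CARD('a) (int s - 1))"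
  have s_le_r: "s \<le> r" and r_plus_s_le: "r + s \<le> CARD('a)" using assms(2,3) by auto
  note L2_rs = L2_rs_eq_isotypic[OF s_le_r r_plus_s_le]
  have trace: "op_trace Lam = of_nat (CARD('a) choose r)"
    using assms(5,6) by (simp add: Lam_def op_trace_kernel_op)
  obtain a where a: "Lam = (\<lambda>f x. a * isotypic_proj r s f x)"
    using equivariant_op_eq_scaled_isotypic_proj[OF s_le_r r_plus_s_le] assms(7,8)
      clinear_op_kernel_op equivariant_kernel_op unfolding L2_rs Lam_def by blast
  have "op_trace Lam = a * d"
    using op_trace_isotypic_proj_eq_binomials[OF s_le_r r_plus_s_le] by (simp add: a op_trace_scale d_def)
  then have "a * d = of_nat (CARD('a) choose r)" using trace by simp
  moreover have "(of_nat (CARD('a) choose r) :: complex) \<noteq> 0" using assms(2) by simp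
  ultimately have "d / of_nat (CARD('a) choose r) * (a * e) = e" for e
    by (metis mult.assoc mult.commute nonzero_divide_eq_eq)
  then have "orth_proj (L2_rs r s :: 'a L2 set)
      = (\<lambda>\<psi> x. (d / of_nat (CARD('a) choose r)) * Lam \<psi> x)"
    by (simp add: L2_rs orth_proj_isotypic[OF s_le_r r_plus_s_le] a)
  then show ?thesis using trace by (simp add: d_def)
qed

end
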